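(* Let $\rho=\begin{pmatrix}p&z\\ z^*&1-p\end{pmatrix}$ be a single-qubit state with $\min\{p,1-p\}<|z|<\sqrt{p(1-p)}$. Then $C_{d,\mathrm{PIO}}(\rho)=0$ and $C_{c,\mathrm{PIO}}(\rho)=+\infty$.
   Context: Fixed computational basis. PIO: channels $X\mapsto\sum_{\alpha,\beta}p_\alpha U_{\alpha,\beta}\Pi_{\beta|\alpha}X\Pi_{\beta|\alpha}U_{\alpha,\beta}^\dagger$ with $p$ a probability distribution, $U_{\alpha,\beta}$ incoherent unitaries (permutation times diagonal unitary), and for each $\alpha$ incoherent projectors $\Pi_{\beta|\alpha}=\sum_{i\in I}|i\rangle\langle i|$ summing to the identity; different input/output dimensions are handled by identifying spaces with spans of subsets of basis vectors of a common space (appending incoherent states, relabelling basis vectors, discarding subsystems allowed). $\Psi_{2^m}=2^{-m/2}\sum_{i=1}^{2^m}|i\rangle$. Distillable coherence $C_{d,\mathrm{PIO}}(\rho)=\sup\{r:\lim_n\inf_{\Lambda\in\mathrm{PIO}}\|\Lambda(\rho^{\otimes n})-\Psi_{2^{\lfloor rn\rfloor}}\|_1=0\}$; coherence cost $C_{c,\mathrm{PIO}}(\rho)=\inf\{r:\lim_n\inf_{\Lambda\in\mathrm{PIO}}\|\Lambda(\Psi_{2^{\lfloor rn\rfloor}})-\rho^{\otimes n}\|_1=0\}$ ($\inf\emptyset=+\infty$). *)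

theory Defs
  imports "HOL-Analysis.Analysis" "HOL-Library.Extended_Real"
begin

text \<open>Operators on the span of the first d computational basis vectors are represented
  as functions nat => nat => complex (matrix entries), vanishing outside {0..<d} x {0..<d}.
  Basis vector number i (1-based in the paper) is index i-1 here.\<close>

type_synonym cmat = "nat \<Rightarrow> nat \<Rightarrow> complex"

definition supported :: "nat \<Rightarrow> cmat \<Rightarrow> bool" where
  "supported d X \<longleftrightarrow> (\<forall>i j. (d \<le> i \<or> d \<le> j) \<longrightarrow> X i j = 0)"

definition mmult :: "nat \<Rightarrow> cmat \<Rightarrow> cmat \<Rightarrow> cmat" where
  "mmult d A B = (\<lambda>i j. \<Sum>k<d. A i k * B k j)"

definition adj :: "cmat \<Rightarrow> cmat" where
  "adj A = (\<lambda>i j. cnj (A j i))"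

definition psd :: "nat \<Rightarrow> cmat \<Rightarrow> bool" where
  "psd d B \<longleftrightarrow> supported d B \<and> (\<forall>i j. B i j = cnj (B j i)) \<and>
     (\<forall>v :: nat \<Rightarrow> complex. 0 \<le> Re (\<Sum>i<d. \<Sum>j<d. cnj (v i) * B i j * v j))"

definition trace_norm :: "nat \<Rightarrow> cmat \<Rightarrow> real" where
  "trace_norm d A = Re (\<Sum>i<d. (THE B. psd d B \<and>
      (\<forall>i<d. \<forall>j<d. mmult d B B i j = mmult d (adj A) A i j)) i i)"

text \<open>Tensor product A \<otimes> B, where B acts on d2 dimensions: index i = i1 * d2 + i2.\<close>
definition tensor :: "nat \<Rightarrow> cmat \<Rightarrow> cmat \<Rightarrow> cmat" where
  "tensor d2 A B = (\<lambda>i j. A (i div d2) (j div d2) * B (i mod d2) (j mod d2))"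

definition one_dim :: cmat where
  "one_dim = (\<lambda>i j. if i = 0 \<and> j = 0 then 1 else 0)"

fun tpow :: "cmat \<Rightarrow> nat \<Rightarrow> cmat" where
  "tpow A 0 = one_dim"
| "tpow A (Suc n) = tensor 2 (tpow A n) A"

definition qubit :: "real \<Rightarrow> complex \<Rightarrow> cmat" where
  "qubit p z = (\<lambda>i j. if i = 0 \<and> j = 0 then complex_of_real p
      else if i = 0 \<and> j = 1 then z
      else if i = 1 \<and> j = 0 then cnj z
      else if i = 1 \<and> j = 1 then complex_of_real (1 - p) else 0)"

text \<open>Maximally coherent state Psi_d = |psi><psi|, psi = d^(-1/2) sum_i |i>.\<close>
definition Psi :: "nat \<Rightarrow> cmat" where
  "Psi d = (\<lambda>i j. if i < d \<and> j < d then complex_of_real (1 / real d) else 0)"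

text \<open>Action of a PIO on the common space span{|0>,...,|N-1>}:
  X \<mapsto> sum_alpha p_alpha sum_beta U_{alpha,beta} Pi_{beta|alpha} X Pi_{beta|alpha} U_{alpha,beta}^dagger,
  where alpha ranges over {0..<K}, Pi_{beta|alpha} = sum of |k><k| over k < N with blk alpha k = beta
  (so these incoherent projectors sum to the identity), and
  U_{alpha,beta} = sum_k phi alpha beta k |sigma alpha beta k><k| (a permutation times a diagonal unitary).\<close>
definition pio_apply ::
  "nat \<Rightarrow> nat \<Rightarrow> (nat \<Rightarrow> real) \<Rightarrow> (nat \<Rightarrow> nat \<Rightarrow> nat) \<Rightarrow> (nat \<Rightarrow> nat \<Rightarrow> nat \<Rightarrow> nat)
    \<Rightarrow> (nat \<Rightarrow> nat \<Rightarrow> nat \<Rightarrow> complex) \<Rightarrow> cmat \<Rightarrow> cmat" where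
  "pio_apply N K p blk \<sigma> \<phi> X = (\<lambda>i j. \<Sum>\<alpha><K. complex_of_real (p \<alpha>) *
      (\<Sum>\<beta>\<in>blk \<alpha> ` {..<N}. \<Sum>k<N. \<Sum>l<N.
         if \<sigma> \<alpha> \<beta> k = i \<and> \<sigma> \<alpha> \<beta> l = j \<and> blk \<alpha> k = \<beta> \<and> blk \<alpha> l = \<beta>
         then \<phi> \<alpha> \<beta> k * X k l * cnj (\<phi> \<alpha> \<beta> l) else 0))"

text \<open>PIO from a d_in-dimensional to a d_out-dimensional space: both are identified with
  the spans of the first d_in resp. d_out basis vectors of a common N-dimensional space
  (other identifications differ only by incoherent permutations, absorbed into the U's),
  and the channel must map operators on the input space to operators on the output space.\<close>
definition PIO :: "nat \<Rightarrow> nat \<Rightarrow> (cmat \<Rightarrow> cmat) \<Rightarrow> bool" where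
  "PIO din dout \<Lambda> \<longleftrightarrow> (\<exists>N K p blk \<sigma> \<phi>.
      din \<le> N \<and> dout \<le> N \<and>
      (\<forall>\<alpha><K. 0 \<le> p \<alpha>) \<and> (\<Sum>\<alpha><K. p \<alpha>) = 1 \<and>
      (\<forall>\<alpha> \<beta>. \<sigma> \<alpha> \<beta> permutes {..<N}) \<and>
      (\<forall>\<alpha> \<beta> k. cmod (\<phi> \<alpha> \<beta> k) = 1) \<and>
      (\<forall>X. supported din X \<longrightarrow> supported dout (pio_apply N K p blk \<sigma> \<phi> X)) \<and>
      (\<forall>X. supported din X \<longrightarrow> \<Lambda> X = pio_apply N K p blk \<sigma> \<phi> X))"

definition C_d_PIO :: "cmat \<Rightarrow> ereal" where
  "C_d_PIO \<rho> = Sup {ereal r | r.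
     ((\<lambda>n. Inf {trace_norm (2 ^ nat \<lfloor>r * real n\<rfloor>)
                   (\<lambda>i j. \<Lambda> (tpow \<rho> n) i j - Psi (2 ^ nat \<lfloor>r * real n\<rfloor>) i j) | \<Lambda>.
                PIO (2 ^ n) (2 ^ nat \<lfloor>r * real n\<rfloor>) \<Lambda>}) \<longlongrightarrow> 0) sequentially}"

text \<open>Coherence cost under PIO of a single-qubit state (Inf of the empty set is +infinity).\<close>
definition C_c_PIO :: "cmat \<Rightarrow> ereal" where
  "C_c_PIO \<rho> = Inf {ereal r | r.
     ((\<lambda>n. Inf {trace_norm (2 ^ n)
                   (\<lambda>i j. \<Lambda> (Psi (2 ^ nat \<lfloor>r * real n\<rfloor>)) i j - tpow \<rho> n i j) | \<Lambda>.
                PIO (2 ^ nat \<lfloor>r * real n\<rfloor>) (2 ^ n) \<Lambda>}) \<longlongrightarrow> 0) sequentially}"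

end

(* Write s = |z| / sqrt(p (1 - p)) < 1. Every tensor power of rho satisfies
   |X_kl| <= s sqrt(X_kk X_ll) for k ~= l, hence |X_kl| <= u X_kk + w X_ll with u = w = s/2,
   while Psi_D satisfies this inequality with (u, w) = (1, 0) and with (0, 1). PIOs preserve
   every such inequality, because each branch U Pi X Pi U^dagger places at most one entry of
   X, up to a phase, at each position. Since the trace norm bounds the entries of the reduced
   state of the last qubit, any PIO image of rho^n stays at trace distance at least
   (1 - s) / (2 (1 + s)) from Psi_(2^m) when m >= 1, and any PIO image of Psi_D stays at
   distance at least (|z| - min(p, 1 - p)) / 2 from rho^n. So no positive distillation rate
   and no finite dilution rate is achievable. *)

theory Submission
  imports Defs "Jordan_Normal_Form.Spectral_Radius"
begin

definition hermitian :: "nat \<Rightarrow> cmat \<Rightarrow> bool" where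
  "hermitian d M \<longleftrightarrow> supported d M \<and> (\<forall>i j. M i j = cnj (M j i))"

definition id_mat :: "nat \<Rightarrow> cmat" where
  "id_mat d = (\<lambda>i j. if i = j \<and> i < d then 1 else 0)"

definition mat_vec :: "nat \<Rightarrow> cmat \<Rightarrow> (nat \<Rightarrow> complex) \<Rightarrow> nat \<Rightarrow> complex" where
  "mat_vec d A x = (\<lambda>i. \<Sum>k<d. A i k * x k)"

definition cinner :: "nat \<Rightarrow> (nat \<Rightarrow> complex) \<Rightarrow> (nat \<Rightarrow> complex) \<Rightarrow> complex" where
  "cinner d x y = (\<Sum>k<d. cnj (x k) * y k)"

lemma hermitian_cnj: "hermitian d M \<Longrightarrow> cnj (M i j) = M j i"
  unfolding hermitian_def by (metis complex_cnj_cnj)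

lemma hermitian_zero: "hermitian d M \<Longrightarrow> d \<le> i \<or> d \<le> j \<Longrightarrow> M i j = 0"
  unfolding hermitian_def supported_def by blast

lemma hermitian_diff: "hermitian d A \<Longrightarrow> hermitian d B \<Longrightarrow> hermitian d (\<lambda>i j. A i j - B i j)"
  unfolding hermitian_def supported_def by (metis complex_cnj_diff diff_zero)

lemma psd_hermitian: "psd d B \<Longrightarrow> hermitian d B"
  unfolding psd_def hermitian_def by blast

lemma cnj_mult_self: "cnj z * z = complex_of_real ((cmod z)\<^sup>2)"
  using complex_norm_square[of z] by (simp add: mult.commute)

lemma cinner_self: "cinner d x x = complex_of_real (\<Sum>k<d. (cmod (x k))\<^sup>2)"
  unfolding cinner_def of_real_sum by (simp add: cnj_mult_self)

lemma cinner_commute: "cinner d y x = cnj (cinner d x y)"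
  unfolding cinner_def by (simp add: mult.commute)

lemma cinner_cong:
  "(\<And>k. k < d \<Longrightarrow> x k = x' k) \<Longrightarrow> (\<And>k. k < d \<Longrightarrow> y k = y' k) \<Longrightarrow> cinner d x y = cinner d x' y'"
  unfolding cinner_def by (rule sum.cong) auto

lemma sum_norm_sq_nonpos_imp_zero:
  fixes x :: "nat \<Rightarrow> complex"
  assumes "(\<Sum>k<d. (cmod (x k))\<^sup>2) \<le> 0" and "a < d"
  shows "x a = 0"
proof -
  have "(\<Sum>k<d. (cmod (x k))\<^sup>2) = 0" using assms(1) by (intro antisym sum_nonneg) auto
  with assms(2) show ?thesis by (simp add: sum_nonneg_eq_0_iff)
qed

lemma sum_id_mat_left: "(\<Sum>k<d. id_mat d a k * f k) = (if a < d then f a else 0)"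
  unfolding id_mat_def by (cases "a < d") (auto simp: if_distrib[of "\<lambda>x. x * _"] cong: if_cong)

lemma sum_id_mat_right: "(\<Sum>k<d. f k * id_mat d k b) = (if b < d then f b else 0)"
  unfolding id_mat_def by (cases "b < d") (auto simp: if_distrib[of "\<lambda>x. _ * x"] cong: if_cong)

lemma mmult_assoc: "mmult d (mmult d A B) C = mmult d A (mmult d B C)"
proof (intro ext)
  fix i j
  have "mmult d (mmult d A B) C i j = (\<Sum>l<d. \<Sum>k<d. A i k * B k l * C l j)"
    unfolding mmult_def by (simp add: sum_distrib_right)
  also have "\<dots> = (\<Sum>k<d. \<Sum>l<d. A i k * B k l * C l j)" by (rule sum.swap)
  also have "\<dots> = mmult d A (mmult d B C) i j"
    unfolding mmult_def by (simp add: sum_distrib_left mult.assoc)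
  finally show "mmult d (mmult d A B) C i j = mmult d A (mmult d B C) i j" .
qed

lemma mmult_id_mat_left: "supported d A \<Longrightarrow> mmult d (id_mat d) A = A"
  unfolding mmult_def supported_def by (intro ext) (simp add: sum_id_mat_left)

lemma mmult_id_mat_right: "supported d A \<Longrightarrow> mmult d A (id_mat d) = A"
  unfolding mmult_def supported_def by (intro ext) (simp add: sum_id_mat_right)

lemma mat_vec_mat_vec: "mat_vec d A (mat_vec d B x) = mat_vec d (mmult d A B) x"
proof (intro ext)
  fix i
  have "mat_vec d A (mat_vec d B x) i = (\<Sum>k<d. \<Sum>l<d. A i k * B k l * x l)"
    unfolding mat_vec_def by (simp add: sum_distrib_left mult.assoc)
  also have "\<dots> = (\<Sum>l<d. \<Sum>k<d. A i k * B k l * x l)" by (rule sum.swap)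
  also have "\<dots> = mat_vec d (mmult d A B) x i"
    unfolding mat_vec_def mmult_def by (simp add: sum_distrib_right)
  finally show "mat_vec d A (mat_vec d B x) i = mat_vec d (mmult d A B) x i" .
qed

lemma mat_vec_id_mat: "i < d \<Longrightarrow> mat_vec d (id_mat d) x i = x i"
  unfolding mat_vec_def by (simp add: sum_id_mat_left)

lemma cinner_mat_vec_hermitian:
  assumes "hermitian d' R"
  shows "cinner d (mat_vec d R x) y = cinner d x (mat_vec d R y)"
proof -
  have "cinner d (mat_vec d R x) y = (\<Sum>a<d. \<Sum>k<d. cnj (x k) * (R k a * y a))"
    unfolding cinner_def mat_vec_def using hermitian_cnj[OF assms]
    by (simp add: sum_distrib_right sum_distrib_left ac_simps)
  also have "\<dots> = (\<Sum>k<d. \<Sum>a<d. cnj (x k) * (R k a * y a))" by (rule sum.swap)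
  also have "\<dots> = cinner d x (mat_vec d R y)"
    unfolding cinner_def mat_vec_def by (simp add: sum_distrib_left)
  finally show ?thesis .
qed

lemma eigenpair_exists:
  assumes "0 < n"
  shows "\<exists>v e. (\<forall>k. n \<le> k \<longrightarrow> v k = 0) \<and> (\<exists>k<n. v k \<noteq> 0) \<and>
    (\<forall>i<n. mat_vec n M v i = e * v i)"
proof -
  define A where "A = mat n n (\<lambda>(i, j). M i j)"
  have A: "A \<in> carrier_mat n n" unfolding A_def by simp
  from spectrum_non_empty[OF A assms] obtain e where "eigenvalue A e"
    unfolding spectrum_def by auto
  then obtain w where "eigenvector A w e" unfolding eigenvalue_def by auto
  hence w: "w \<in> carrier_vec n" "w \<noteq> 0\<^sub>v n" "A *\<^sub>v w = e \<cdot>\<^sub>v w"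
    unfolding eigenvector_def using A by auto
  define v where "v = (\<lambda>k. if k < n then w $ k else 0)"
  have "\<exists>k<n. v k \<noteq> 0"
  proof (rule ccontr)
    assume "\<not> ?thesis"
    hence "w = 0\<^sub>v n" using w(1) unfolding v_def by (intro eq_vecI) auto
    with w(2) show False ..
  qed
  moreover have "mat_vec n M v i = e * v i" if "i < n" for i
  proof -
    have "mat_vec n M v i = (A *\<^sub>v w) $ i"
      using that w(1) unfolding A_def v_def
      by (auto simp: mat_vec_def mult_mat_vec_def scalar_prod_def row_def lessThan_atLeast0
          intro!: sum.cong)
    thus ?thesis using that w(1,3) unfolding v_def by simp
  qed
  ultimately show ?thesis by (intro exI[of _ v] exI[of _ e]) (auto simp: v_def)
qed

lemma hermitian_eigenvalue_real:
  assumes M: "hermitian n M" and ev: "\<forall>i<n. mat_vec n M v i = e * v i"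
    and v: "cinner n v v \<noteq> 0"
  shows "e = complex_of_real (Re e)"
proof -
  have "cnj e * cinner n v v = cinner n (mat_vec n M v) v"
    unfolding cinner_def using ev by (simp add: sum_distrib_left ac_simps)
  also have "\<dots> = cinner n v (mat_vec n M v)" by (rule cinner_mat_vec_hermitian[OF M])
  also have "\<dots> = e * cinner n v v"
    unfolding cinner_def using ev by (simp add: sum_distrib_left ac_simps)
  finally have "cnj e = e" using v by simp
  thus ?thesis by (auto simp: complex_eq_iff)
qed

lemma hermitian_unit_eigenvector_exists:
  assumes M: "hermitian n M" and n: "0 < n"
  shows "\<exists>v e. (\<forall>k. n \<le> k \<longrightarrow> v k = 0) \<and> cinner n v v = 1 \<and>
    (\<forall>i<n. mat_vec n M v i = complex_of_real e * v i)"
proof -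
  obtain w e where w0: "\<forall>k. n \<le> k \<longrightarrow> w k = 0" and "\<exists>k<n. w k \<noteq> 0"
    and ev: "\<forall>i<n. mat_vec n M w i = e * w i"
    using eigenpair_exists[OF n] by blast
  then obtain k0 where k0: "k0 < n" "w k0 \<noteq> 0" by blast
  define r where "r = (\<Sum>k<n. (cmod (w k))\<^sup>2)"
  have "(cmod (w k0))\<^sup>2 \<le> r" unfolding r_def by (rule member_le_sum) (use k0 in auto)
  moreover have "0 < (cmod (w k0))\<^sup>2" using k0 by simp
  ultimately have r: "0 < r" by linarith
  have ww: "cinner n w w = complex_of_real r" unfolding r_def by (rule cinner_self)
  define v where "v = (\<lambda>k. w k / complex_of_real (sqrt r))"
  have "cinner n v v = cinner n w w / complex_of_real r"
    unfolding v_def cinner_def using r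
    by (simp add: sum_divide_distrib power2_eq_square[symmetric] flip: of_real_power)
  hence "cinner n v v = 1" using r unfolding ww by simp
  moreover have "mat_vec n M v i = complex_of_real (Re e) * v i" if "i < n" for i
  proof -
    have "e = complex_of_real (Re e)" using hermitian_eigenvalue_real[OF M ev] ww r by simp
    thus ?thesis using ev that unfolding v_def mat_vec_def
      by (simp add: sum_divide_distrib[symmetric] mult.assoc)
  qed
  ultimately show ?thesis using w0 by (intro exI[of _ v] exI[of _ "Re e"]) (auto simp: v_def)
qed

lemma mmult_reflection_self:
  assumes w: "\<forall>k. D \<le> k \<longrightarrow> w k = 0"
    and c: "(complex_of_real c)\<^sup>2 * cinner D w w = 2 * complex_of_real c"
  defines "R \<equiv> \<lambda>a b. id_mat D a b - complex_of_real c * w a * cnj (w b)"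
  shows "mmult D R R = id_mat D"
proof (intro ext)
  fix a b
  let ?c = "complex_of_real c"
  have "R a k * R k b = id_mat D a k * id_mat D k b - ?c * (w a * (cnj (w k) * id_mat D k b))
      - ?c * (cnj (w b) * (id_mat D a k * w k)) + ?c\<^sup>2 * w a * cnj (w b) * (cnj (w k) * w k)"
    for k unfolding R_def by (simp add: algebra_simps power2_eq_square)
  hence "mmult D R R a b = (\<Sum>k<D. id_mat D a k * id_mat D k b)
      - ?c * (w a * (\<Sum>k<D. cnj (w k) * id_mat D k b))
      - ?c * (cnj (w b) * (\<Sum>k<D. id_mat D a k * w k))
      + ?c\<^sup>2 * w a * cnj (w b) * cinner D w w"
    unfolding mmult_def cinner_def by (simp add: sum.distrib sum_subtractf sum_distrib_left)
  also have "\<dots> = id_mat D a b - 2 * ?c * w a * cnj (w b) + (?c\<^sup>2 * cinner D w w) * (w a * cnj (w b))"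
    unfolding sum_id_mat_left sum_id_mat_right using w by (auto simp: id_mat_def)
  also have "\<dots> = id_mat D a b" unfolding c by simp
  finally show "mmult D R R a b = id_mat D a b" .
qed

lemma cinner_self_minus_phase_basis:
  assumes v: "cinner D v v = 1" and "d < D" and s: "cnj s * s = 1" and vd: "v d = s * complex_of_real t"
  shows "cinner D (\<lambda>k. v k - (if k = d then s else 0)) (\<lambda>k. v k - (if k = d then s else 0))
    = complex_of_real (2 - 2 * t)"
proof -
  have "cnj (v k - (if k = d then s else 0)) * (v k - (if k = d then s else 0)) = cnj (v k) * v k
      + (if k = d then cnj s * s - cnj (v k) * s - cnj s * v k else 0)" for k
    by (simp add: algebra_simps)
  hence "cinner D (\<lambda>k. v k - (if k = d then s else 0)) (\<lambda>k. v k - (if k = d then s else 0))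
      = cinner D v v + (cnj s * s - cnj (v d) * s - cnj s * v d)"
    unfolding cinner_def using \<open>d < D\<close> by (simp add: sum.distrib)
  moreover have "cnj (v d) * s = (cnj s * s) * complex_of_real t" "cnj s * v d = (cnj s * s) * complex_of_real t"
    unfolding vd by (simp_all add: ac_simps)
  ultimately show ?thesis using v s by simp
qed

text \<open>The reflection in the hyperplane orthogonal to \<open>w = v - s e\<^sub>d\<close>, with \<open>s\<close> the phase of
  \<open>v\<^sub>d\<close>, swaps \<open>v\<close> and \<open>s e\<^sub>d\<close>; in the degenerate case \<open>v = s e\<^sub>d\<close> it is replaced by the identity.\<close>

lemma householder_reflection_exists:
  assumes v: "cinner D v v = 1" and v0: "\<forall>k. D \<le> k \<longrightarrow> v k = 0" and dD: "d < D"
  shows "\<exists>R s. hermitian D R \<and> mmult D R R = id_mat D \<and> (\<forall>a. R a d = cnj s * v a) \<and> cmod s = 1"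
proof -
  define t where "t = cmod (v d)"
  define s where "s = (if v d = 0 then 1 else v d / complex_of_real t)"
  have s: "cmod s = 1" unfolding s_def t_def by (simp add: norm_divide)
  have vd: "v d = s * complex_of_real t" unfolding s_def t_def by auto
  have ss: "cnj s * s = 1" using s cnj_mult_self[of s] by simp
  define w where "w = (\<lambda>k. v k - (if k = d then s else 0))"
  have w0: "\<forall>k. D \<le> k \<longrightarrow> w k = 0" using v0 dD unfolding w_def by auto
  have va: "v a = w a + (if a = d then s else 0)" for a unfolding w_def by simp
  have ww: "cinner D w w = complex_of_real (2 - 2 * t)"
    unfolding w_def by (rule cinner_self_minus_phase_basis[OF v dD ss vd])
  hence ww': "(\<Sum>k<D. (cmod (w k))\<^sup>2) = 2 - 2 * t" unfolding cinner_self by (simp only: of_real_eq_iff)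
  define c where "c = (if t = 1 then 0 else 1 / (1 - t))"
  have "c\<^sup>2 * (2 - 2 * t) = 2 * c"
  proof (cases "t = 1")
    case False
    hence "c * (1 - t) = 1" unfolding c_def by simp
    moreover have "c\<^sup>2 * (2 - 2 * t) = 2 * c * (c * (1 - t))" by (simp add: power2_eq_square algebra_simps)
    ultimately show ?thesis by simp
  qed (simp add: c_def)
  hence c: "(complex_of_real c)\<^sup>2 * cinner D w w = 2 * complex_of_real c"
    unfolding ww by (metis of_real_mult of_real_numeral of_real_power)
  define R where "R = (\<lambda>a b. id_mat D a b - complex_of_real c * w a * cnj (w b))"
  have "hermitian D R" unfolding hermitian_def supported_def R_def id_mat_def using w0 by auto
  moreover have "mmult D R R = id_mat D" unfolding R_def by (rule mmult_reflection_self[OF w0 c])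
  moreover have "R a d = cnj s * v a" for a
  proof (cases "t = 1")
    case True
    have "(\<Sum>k<D. (cmod (w k))\<^sup>2) \<le> 0" using ww' True by simp
    hence "w a = 0" using w0 sum_norm_sq_nonpos_imp_zero by (cases "a < D") auto
    thus ?thesis unfolding R_def va using True ss dD by (simp add: id_mat_def c_def)
  next
    case False
    have cwd: "cnj (w d) = cnj s * complex_of_real (t - 1)" unfolding w_def using vd by (simp add: algebra_simps)
    have c1: "complex_of_real c * complex_of_real (t - 1) = -1"
      unfolding c_def using False by (simp add: field_simps flip: of_real_mult)
    have "R a d = id_mat D a d - (complex_of_real c * complex_of_real (t - 1)) * cnj s * w a"
      unfolding R_def cwd by (simp add: mult_ac)
    hence "R a d = id_mat D a d + cnj s * w a" unfolding c1 by simp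
    thus ?thesis unfolding va using ss dD w0 by (cases "a < D") (auto simp: id_mat_def algebra_simps)
  qed
  ultimately show ?thesis using s by blast
qed

lemma hermitian_sandwich:
  assumes R: "hermitian D R" and M: "hermitian D M"
  shows "hermitian D (mmult D (mmult D R M) R)"
  unfolding hermitian_def supported_def
proof (intro conjI allI impI)
  fix i j assume "D \<le> i \<or> D \<le> j"
  thus "mmult D (mmult D R M) R i j = 0" unfolding mmult_def using hermitian_zero[OF R] by auto
next
  fix i j
  have "cnj (mmult D (mmult D R M) R j i) = (\<Sum>k<D. \<Sum>l<D. R i k * M k l * R l j)"
    unfolding mmult_def using hermitian_cnj[OF R] hermitian_cnj[OF M]
    by (simp add: sum_distrib_right sum_distrib_left ac_simps)
  also have "\<dots> = (\<Sum>l<D. \<Sum>k<D. R i k * M k l * R l j)" by (rule sum.swap)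
  also have "\<dots> = mmult D (mmult D R M) R i j" unfolding mmult_def by (simp add: sum_distrib_right)
  finally show "mmult D (mmult D R M) R i j = cnj (mmult D (mmult D R M) R j i)" by simp
qed

lemma hermitian_Suc_last_col_zero:
  assumes "hermitian (Suc d) M" and "\<forall>a. M a d = 0"
  shows "hermitian d M"
  unfolding hermitian_def supported_def
proof (intro conjI allI impI)
  fix i j assume "d \<le> i \<or> d \<le> j"
  then consider "i = d" | "j = d" | "Suc d \<le> i \<or> Suc d \<le> j" by linarith
  thus "M i j = 0" using assms hermitian_zero hermitian_cnj by cases (metis complex_cnj_zero)+
qed (use assms(1) hermitian_def in blast)

lemma cinner_mat_vec_involution:
  assumes R: "hermitian D R" and RR: "mmult D R R = id_mat D"
  shows "cinner D (mat_vec D R x) (mat_vec D R y) = cinner D x y"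
proof -
  have "cinner D (mat_vec D R x) (mat_vec D R y) = cinner D x (mat_vec D R (mat_vec D R y))"
    by (rule cinner_mat_vec_hermitian[OF R])
  also have "\<dots> = cinner D x y" unfolding mat_vec_mat_vec RR by (rule cinner_cong) (auto simp: mat_vec_id_mat)
  finally show ?thesis .
qed

definition orthonormal :: "nat \<Rightarrow> (nat \<Rightarrow> nat \<Rightarrow> complex) \<Rightarrow> bool" where
  "orthonormal d u \<longleftrightarrow> (\<forall>i<d. \<forall>j<d. cinner d (u i) (u j) = (if i = j then 1 else 0))"

definition spectral_sum :: "nat \<Rightarrow> (nat \<Rightarrow> nat \<Rightarrow> complex) \<Rightarrow> (nat \<Rightarrow> real) \<Rightarrow> cmat" where
  "spectral_sum d u f = (\<lambda>a b. \<Sum>i<d. complex_of_real (f i) * u i a * cnj (u i b))"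

definition spectral_decomposition ::
    "nat \<Rightarrow> cmat \<Rightarrow> (nat \<Rightarrow> nat \<Rightarrow> complex) \<Rightarrow> (nat \<Rightarrow> real) \<Rightarrow> bool" where
  "spectral_decomposition d M u lam \<longleftrightarrow>
     (\<forall>i<d. \<forall>k. d \<le> k \<longrightarrow> u i k = 0) \<and> orthonormal d u \<and> M = spectral_sum d u lam"

lemma spectral_sum_sandwich:
  assumes R: "hermitian D' R"
  shows "mmult D (mmult D R (spectral_sum m x f)) R = spectral_sum m (\<lambda>i. mat_vec D R (x i)) f"
proof (intro ext)
  fix a b
  have "mmult D (mmult D R (spectral_sum m x f)) R a b
      = (\<Sum>k<D. \<Sum>l<D. \<Sum>i<m. complex_of_real (f i) * (R a k * x i k) * (cnj (x i l) * R l b))"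
    unfolding mmult_assoc unfolding mmult_def spectral_sum_def
    by (simp add: sum_distrib_left sum_distrib_right ac_simps)
  also have "\<dots> = (\<Sum>i<m. \<Sum>k<D. \<Sum>l<D. complex_of_real (f i) * (R a k * x i k) * (cnj (x i l) * R l b))"
    by (subst sum.swap, subst (2) sum.swap) (rule refl)
  also have "\<dots> = spectral_sum m (\<lambda>i. mat_vec D R (x i)) f a b"
    unfolding spectral_sum_def mat_vec_def using hermitian_cnj[OF R]
    by (simp add: sum_distrib_left sum_distrib_right mult.assoc mult.commute)
  finally show "mmult D (mmult D R (spectral_sum m x f)) R a b = spectral_sum m (\<lambda>i. mat_vec D R (x i)) f a b" .
qed

lemma deflation_hermitian:
  assumes M: "hermitian (Suc d) M"
    and v: "\<forall>k. Suc d \<le> k \<longrightarrow> v k = 0" "cinner (Suc d) v v = 1"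
    and ev: "\<forall>i<Suc d. mat_vec (Suc d) M v i = complex_of_real e * v i"
    and R: "hermitian (Suc d) R" "\<forall>a. R a d = cnj s * v a"
  defines "M1 \<equiv> \<lambda>a b. M a b - complex_of_real e * v a * cnj (v b)"
  shows "hermitian (Suc d) M1" "hermitian d (mmult (Suc d) (mmult (Suc d) R M1) R)"
proof -
  let ?D = "Suc d"
  show M1: "hermitian ?D M1"
    unfolding hermitian_def supported_def M1_def
    using hermitian_zero[OF M] hermitian_cnj[OF M] v(1) by (auto simp: ac_simps)
  have "mat_vec ?D M1 v k = 0" for k
  proof (cases "k < ?D")
    case True
    have "mat_vec ?D M1 v k = mat_vec ?D M v k - complex_of_real e * v k * cinner ?D v v"
      unfolding M1_def mat_vec_def cinner_def
      by (simp add: algebra_simps sum_subtractf sum_distrib_left)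
    thus ?thesis using ev True v(2) by simp
  next
    case False
    thus ?thesis using hermitian_zero[OF M1] unfolding mat_vec_def by simp
  qed
  moreover have "mmult ?D M1 R k d = cnj s * mat_vec ?D M1 v k" for k
    unfolding mmult_def mat_vec_def using R(2) by (simp add: sum_distrib_left distrib_left ac_simps)
  ultimately have "mmult ?D M1 R k d = 0" for k by simp
  hence "\<forall>a. mmult ?D (mmult ?D R M1) R a d = 0" unfolding mmult_assoc by (simp add: mmult_def)
  thus "hermitian d (mmult ?D (mmult ?D R M1) R)"
    by (rule hermitian_Suc_last_col_zero[OF hermitian_sandwich[OF R(1) M1]])
qed

lemma mat_vec_involution_column:
  assumes RR: "mmult D R R = id_mat D" and Rd: "\<forall>a. R a d = cnj s * v a" and s: "cmod s = 1"
  shows "mat_vec D R v a = s * id_mat D a d"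
proof -
  have "v k = s * R k d" for k using Rd s cnj_mult_self[of s] by (simp add: mult.assoc[symmetric] mult.commute)
  hence "mat_vec D R v a = s * mmult D R R a d"
    unfolding mat_vec_def mmult_def by (simp add: sum_distrib_left distrib_left ac_simps)
  thus ?thesis unfolding RR .
qed

lemma orthonormal_reflected_insert:
  assumes R: "hermitian (Suc d) R" "mmult (Suc d) R R = id_mat (Suc d)"
    and Rv: "\<forall>a. mat_vec (Suc d) R v a = s * id_mat (Suc d) a d" and v: "cinner (Suc d) v v = 1"
    and u: "orthonormal d u" and u0: "\<forall>i<d. \<forall>k. d \<le> k \<longrightarrow> u i k = 0"
  shows "orthonormal (Suc d) (\<lambda>i. if i < d then mat_vec (Suc d) R (u i) else v)"
  unfolding orthonormal_def
proof (intro allI impI)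
  let ?D = "Suc d" and ?U = "\<lambda>i. if i < d then mat_vec (Suc d) R (u i) else v"
  fix i j assume i: "i < ?D" and j: "j < ?D"
  have Uv: "cinner ?D (?U i) v = 0" if "i < d" for i
  proof -
    have "cinner ?D (?U i) v = cinner ?D (u i) (mat_vec ?D R v)"
      using that by (simp add: cinner_mat_vec_hermitian[OF R(1)])
    also have "\<dots> = s * cnj (u i d)"
      using Rv sum_id_mat_right[where d="?D" and f="\<lambda>k. cnj (u i k) * s" and b=d]
      by (simp add: cinner_def ac_simps)
    finally show ?thesis using u0 that by simp
  qed
  have uu: "cinner ?D (u i) (u j) = cinner d (u i) (u j)" if "i < d" "j < d" for i j
    unfolding cinner_def using u0 that by simp
  show "cinner ?D (?U i) (?U j) = (if i = j then 1 else 0)"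
  proof (cases "i < d"; cases "j < d")
    assume "i < d" "j < d"
    thus ?thesis using u uu cinner_mat_vec_involution[OF R] unfolding orthonormal_def by simp
  next
    assume "i < d" "\<not> j < d"
    thus ?thesis using Uv by auto
  next
    assume "\<not> i < d" "j < d"
    thus ?thesis using Uv[of j] cinner_commute[of ?D v "?U j"] by auto
  next
    assume "\<not> i < d" "\<not> j < d"
    thus ?thesis using i j v by auto
  qed
qed

lemma spectral_decomposition_Suc:
  assumes R: "hermitian (Suc d) R" "mmult (Suc d) R R = id_mat (Suc d)" "\<forall>a. R a d = cnj s * v a"
    "cmod s = 1"
    and v: "\<forall>k. Suc d \<le> k \<longrightarrow> v k = 0" "cinner (Suc d) v v = 1"
    and M1: "supported (Suc d) M1"
    and sd: "spectral_decomposition d (mmult (Suc d) (mmult (Suc d) R M1) R) u mu"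
  shows "spectral_decomposition (Suc d) (\<lambda>a b. M1 a b + complex_of_real e * v a * cnj (v b))
    (\<lambda>i. if i < d then mat_vec (Suc d) R (u i) else v) (\<lambda>i. if i < d then mu i else e)"
proof -
  let ?D = "Suc d"
  define U where "U = (\<lambda>i. if i < d then mat_vec ?D R (u i) else v)"
  have u0: "\<forall>i<d. \<forall>k. d \<le> k \<longrightarrow> u i k = 0" and u: "orthonormal d u"
    using sd unfolding spectral_decomposition_def by auto
  have "M1 = mmult ?D (mmult ?D (mmult ?D R R) M1) (mmult ?D R R)"
    unfolding R(2) mmult_id_mat_left[OF M1] mmult_id_mat_right[OF M1] ..
  also have "\<dots> = mmult ?D (mmult ?D R (mmult ?D (mmult ?D R M1) R)) R" by (simp only: mmult_assoc)
  also have "\<dots> = spectral_sum d (\<lambda>i. mat_vec ?D R (u i)) mu"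
    using sd unfolding spectral_decomposition_def by (simp add: spectral_sum_sandwich[OF R(1)])
  finally have M1_eq: "M1 = spectral_sum d (\<lambda>i. mat_vec ?D R (u i)) mu" .
  have "orthonormal ?D U"
    unfolding U_def using mat_vec_involution_column[OF R(2-4)] v(2) u u0
    by (intro orthonormal_reflected_insert[OF R(1,2)]) auto
  moreover have "\<forall>i<?D. \<forall>k. ?D \<le> k \<longrightarrow> U i k = 0"
    unfolding U_def mat_vec_def using hermitian_zero[OF R(1)] v(1) by auto
  moreover have "(\<lambda>a b. M1 a b + complex_of_real e * v a * cnj (v b))
      = spectral_sum ?D U (\<lambda>i. if i < d then mu i else e)"
    unfolding M1_eq spectral_sum_def U_def by simp
  ultimately show ?thesis unfolding spectral_decomposition_def U_def by blast
qed

theorem hermitian_spectral_decomposition: "hermitian d M \<Longrightarrow> \<exists>u lam. spectral_decomposition d M u lam"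
proof (induction d arbitrary: M)
  case 0
  have "M = spectral_sum 0 u lam" for u lam
    using hermitian_zero[OF "0.prems"] unfolding spectral_sum_def by (intro ext) simp
  thus ?case unfolding spectral_decomposition_def orthonormal_def by simp
next
  case (Suc d M)
  obtain v e where v: "\<forall>k. Suc d \<le> k \<longrightarrow> v k = 0" "cinner (Suc d) v v = 1"
    and ev: "\<forall>i<Suc d. mat_vec (Suc d) M v i = complex_of_real e * v i"
    using hermitian_unit_eigenvector_exists[OF Suc.prems zero_less_Suc] by blast
  obtain R s where R: "hermitian (Suc d) R" "mmult (Suc d) R R = id_mat (Suc d)"
    "\<forall>a. R a d = cnj s * v a" "cmod s = 1"
    using householder_reflection_exists[OF v(2,1) lessI] by blast
  define M1 where "M1 = (\<lambda>a b. M a b - complex_of_real e * v a * cnj (v b))"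
  note M1 = deflation_hermitian[OF Suc.prems v ev R(1,3), folded M1_def]
  obtain u mu where "spectral_decomposition d (mmult (Suc d) (mmult (Suc d) R M1) R) u mu"
    using Suc.IH[OF M1(2)] by blast
  moreover have "supported (Suc d) M1" using M1(1) unfolding hermitian_def by blast
  moreover have "(\<lambda>a b. M1 a b + complex_of_real e * v a * cnj (v b)) = M" unfolding M1_def by simp
  ultimately show ?case using spectral_decomposition_Suc[OF R v, of M1 u mu e] by auto
qed

lemma spectral_sum_zero: "\<forall>i<d. \<forall>k. d \<le> k \<longrightarrow> u i k = 0 \<Longrightarrow> supported d (spectral_sum d u f)"
  unfolding supported_def spectral_sum_def by auto

lemma spectral_sum_mult:
  assumes "orthonormal d u"
  shows "mmult d (spectral_sum d u f) (spectral_sum d u g) = spectral_sum d u (\<lambda>i. f i * g i)"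
proof (intro ext)
  fix a b
  let ?t = "\<lambda>i j. complex_of_real (f i) * complex_of_real (g j) * u i a * cnj (u j b)"
  have "mmult d (spectral_sum d u f) (spectral_sum d u g) a b
      = (\<Sum>k<d. \<Sum>j<d. \<Sum>i<d. ?t i j * (cnj (u i k) * u j k))"
    unfolding mmult_def spectral_sum_def by (simp add: sum_distrib_left sum_distrib_right ac_simps)
  also have "\<dots> = (\<Sum>i<d. \<Sum>j<d. \<Sum>k<d. ?t i j * (cnj (u i k) * u j k))"
    by (subst (2) sum.swap, subst sum.swap, subst (2) sum.swap) (rule refl)
  also have "\<dots> = (\<Sum>i<d. \<Sum>j<d. ?t i j * cinner d (u i) (u j))"
    unfolding cinner_def by (simp add: sum_distrib_left)
  also have "\<dots> = (\<Sum>i<d. \<Sum>j<d. if j = i then ?t i j else 0)"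
    using assms unfolding orthonormal_def by (intro sum.cong refl) auto
  also have "\<dots> = spectral_sum d u (\<lambda>i. f i * g i) a b" unfolding spectral_sum_def by simp
  finally show "mmult d (spectral_sum d u f) (spectral_sum d u g) a b = spectral_sum d u (\<lambda>i. f i * g i) a b" .
qed

lemma mat_vec_spectral_sum:
  "mat_vec d (spectral_sum d u f) w a = (\<Sum>i<d. complex_of_real (f i) * u i a * cinner d (u i) w)"
proof -
  have "mat_vec d (spectral_sum d u f) w a
      = (\<Sum>k<d. \<Sum>i<d. complex_of_real (f i) * u i a * (cnj (u i k) * w k))"
    unfolding mat_vec_def spectral_sum_def by (simp add: sum_distrib_left sum_distrib_right ac_simps)
  also have "\<dots> = (\<Sum>i<d. complex_of_real (f i) * u i a * cinner d (u i) w)"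
    unfolding cinner_def by (subst sum.swap) (simp add: sum_distrib_left)
  finally show ?thesis .
qed

lemma mat_vec_spectral_sum_basis:
  assumes "orthonormal d u" "j < d"
  shows "mat_vec d (spectral_sum d u f) (u j) a = complex_of_real (f j) * u j a"
proof -
  have "mat_vec d (spectral_sum d u f) (u j) a
      = (\<Sum>i<d. if i = j then complex_of_real (f i) * u i a else 0)"
    unfolding mat_vec_spectral_sum using assms unfolding orthonormal_def by (intro sum.cong refl) auto
  thus ?thesis using assms(2) by simp
qed

lemma psd_spectral_sum:
  assumes "\<forall>i<d. \<forall>k. d \<le> k \<longrightarrow> u i k = 0" and "\<And>i. 0 \<le> f i"
  shows "psd d (spectral_sum d u f)"
  unfolding psd_def
proof (intro conjI allI)
  show "supported d (spectral_sum d u f)" by (rule spectral_sum_zero[OF assms(1)])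
  fix i j show "spectral_sum d u f i j = cnj (spectral_sum d u f j i)"
    unfolding spectral_sum_def by (simp add: ac_simps)
next
  fix v :: "nat \<Rightarrow> complex"
  have "(\<Sum>a<d. \<Sum>b<d. cnj (v a) * spectral_sum d u f a b * v b)
      = (\<Sum>a<d. cnj (v a) * mat_vec d (spectral_sum d u f) v a)"
    unfolding mat_vec_def by (simp add: sum_distrib_left mult.assoc)
  also have "\<dots> = (\<Sum>i<d. \<Sum>a<d. complex_of_real (f i) * cinner d (u i) v * (u i a * cnj (v a)))"
    unfolding mat_vec_spectral_sum by (subst sum.swap) (simp add: sum_distrib_left ac_simps)
  also have "\<dots> = (\<Sum>i<d. complex_of_real (f i) * (cnj (cinner d (u i) v) * cinner d (u i) v))"
    unfolding sum_distrib_left[symmetric] by (simp add: cinner_def ac_simps)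
  finally have "Re (\<Sum>a<d. \<Sum>b<d. cnj (v a) * spectral_sum d u f a b * v b)
      = (\<Sum>i<d. f i * (cmod (cinner d (u i) v))\<^sup>2)"
    unfolding cnj_mult_self by (simp add: Re_sum)
  also have "\<dots> \<ge> 0" using assms(2) by (intro sum_nonneg) auto
  finally show "0 \<le> Re (\<Sum>a<d. \<Sum>b<d. cnj (v a) * spectral_sum d u f a b * v b)" .
qed

text \<open>If \<open>\<sigma> > 0\<close>, the vector \<open>B x - \<sigma> x\<close> is an eigenvector of \<open>B\<close> for the eigenvalue \<open>-\<sigma>\<close>,
  so positivity of \<open>B\<close> forces it to vanish; if \<open>\<sigma> = 0\<close>, then \<open>\<parallel>B x\<parallel>\<^sup>2 = \<langle>x, B\<^sup>2 x\<rangle> = 0\<close>.\<close>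

lemma psd_mat_vec_eq_of_square:
  assumes B: "psd d B" and \<sigma>: "0 \<le> \<sigma>"
    and ev: "\<forall>a<d. mat_vec d (mmult d B B) x a = complex_of_real (\<sigma>\<^sup>2) * x a"
  shows "\<forall>a<d. mat_vec d B x a = complex_of_real \<sigma> * x a"
proof (cases "\<sigma> = 0")
  case True
  define y where "y = mat_vec d B x"
  have "cinner d y y = cinner d x (mat_vec d B y)"
    unfolding y_def by (rule cinner_mat_vec_hermitian[OF psd_hermitian[OF B]])
  also have "\<dots> = 0" unfolding y_def mat_vec_mat_vec cinner_def using ev True by simp
  finally have "complex_of_real (\<Sum>a<d. (cmod (y a))\<^sup>2) = 0" unfolding cinner_self .
  hence "(\<Sum>a<d. (cmod (y a))\<^sup>2) \<le> 0" by (simp only: of_real_eq_0_iff order_refl)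
  thus ?thesis using True sum_norm_sq_nonpos_imp_zero unfolding y_def by simp
next
  case False
  define y where "y = (\<lambda>a. mat_vec d B x a - complex_of_real \<sigma> * x a)"
  have By: "mat_vec d B y a = - complex_of_real \<sigma> * y a" if "a < d" for a
  proof -
    have "mat_vec d B y a = mat_vec d B (mat_vec d B x) a - complex_of_real \<sigma> * mat_vec d B x a"
      unfolding y_def mat_vec_def by (simp add: algebra_simps sum_subtractf sum_distrib_left)
    also have "\<dots> = complex_of_real (\<sigma>\<^sup>2) * x a - complex_of_real \<sigma> * mat_vec d B x a"
      unfolding mat_vec_mat_vec using ev that by simp
    also have "\<dots> = - complex_of_real \<sigma> * y a" unfolding y_def by (simp add: algebra_simps power2_eq_square)
    finally show ?thesis .
  qed
  have "(\<Sum>i<d. \<Sum>j<d. cnj (y i) * B i j * y j) = (\<Sum>i<d. cnj (y i) * mat_vec d B y i)"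
    unfolding mat_vec_def by (simp add: sum_distrib_left mult.assoc)
  also have "\<dots> = (\<Sum>i<d. - complex_of_real \<sigma> * (cnj (y i) * y i))"
    using By by (intro sum.cong) auto
  also have "\<dots> = - complex_of_real \<sigma> * cinner d y y" unfolding cinner_def sum_distrib_left ..
  also have "\<dots> = complex_of_real (- \<sigma> * (\<Sum>i<d. (cmod (y i))\<^sup>2))"
    unfolding cinner_self of_real_mult of_real_minus ..
  finally have q: "(\<Sum>i<d. \<Sum>j<d. cnj (y i) * B i j * y j) = complex_of_real (- \<sigma> * (\<Sum>i<d. (cmod (y i))\<^sup>2))" .
  have "0 \<le> Re (\<Sum>i<d. \<Sum>j<d. cnj (y i) * B i j * y j)" using B unfolding psd_def by blast
  hence "\<sigma> * (\<Sum>i<d. (cmod (y i))\<^sup>2) \<le> 0" unfolding q Re_complex_of_real by simp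
  hence "(\<Sum>i<d. (cmod (y i))\<^sup>2) \<le> 0" using \<sigma> False by (simp add: mult_le_0_iff sum_nonneg)
  hence "\<forall>a<d. y a = 0" using sum_norm_sq_nonpos_imp_zero by blast
  thus ?thesis unfolding y_def by simp
qed

lemma eq_spectral_sum_if_eigenbasis:
  assumes B: "supported d B" and u: "orthonormal d u" and u0: "\<forall>i<d. \<forall>k. d \<le> k \<longrightarrow> u i k = 0"
    and Bu: "\<And>i a. i < d \<Longrightarrow> a < d \<Longrightarrow> mat_vec d B (u i) a = complex_of_real (f i) * u i a"
    and Bw: "\<And>w a. \<forall>i<d. cinner d (u i) w = 0 \<Longrightarrow> a < d \<Longrightarrow> mat_vec d B w a = 0"
  shows "B = spectral_sum d u f"
proof (intro ext)
  fix a b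
  show "B a b = spectral_sum d u f a b"
  proof (cases "a < d \<and> b < d")
    case False
    thus ?thesis using B spectral_sum_zero[OF u0, of f] unfolding supported_def by (auto simp: not_less)
  next
    case True
    define e where "e = (\<lambda>k. if k = b then (1::complex) else 0)"
    define w where "w = (\<lambda>k. e k - (\<Sum>i<d. cnj (u i b) * u i k))"
    have "cinner d (u j) w = 0" if j: "j < d" for j
    proof -
      have "cinner d (u j) w = cnj (u j b) - (\<Sum>i<d. cnj (u i b) * cinner d (u j) (u i))"
        unfolding w_def e_def cinner_def using True
        by (simp add: algebra_simps sum_subtractf sum_distrib_left if_distrib[of "\<lambda>x. _ * x"]
            cong: if_cong) (rule sum.swap)
      also have "\<dots> = 0" using u j unfolding orthonormal_def
        by (simp add: if_distrib[of "\<lambda>x. _ * x"] cong: if_cong)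
      finally show ?thesis .
    qed
    hence Bw0: "mat_vec d B w a = 0" using Bw True by blast
    have "B a b = mat_vec d B e a" unfolding mat_vec_def e_def using True
      by (simp add: if_distrib[of "\<lambda>x. _ * x"] cong: if_cong)
    also have "\<dots> = (\<Sum>i<d. cnj (u i b) * mat_vec d B (u i) a) + mat_vec d B w a"
    proof -
      have "e = (\<lambda>k. (\<Sum>i<d. cnj (u i b) * u i k) + w k)" unfolding w_def by simp
      hence "mat_vec d B e a = (\<Sum>k<d. \<Sum>i<d. cnj (u i b) * (B a k * u i k)) + mat_vec d B w a"
        unfolding mat_vec_def by (simp add: algebra_simps sum.distrib sum_distrib_left)
      thus ?thesis unfolding mat_vec_def by (subst (asm) sum.swap) (simp add: sum_distrib_left)
    qed
    also have "\<dots> = spectral_sum d u f a b"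
      unfolding Bw0 spectral_sum_def using Bu True by (simp add: ac_simps)
    finally show ?thesis .
  qed
qed

lemma adj_hermitian: "hermitian d M \<Longrightarrow> adj M = M"
  unfolding adj_def by (intro ext) (simp add: hermitian_cnj)

lemma psd_sqrt_unique:
  assumes M: "hermitian d M" and sd: "spectral_decomposition d M u lam"
    and B: "psd d B" and BB: "\<forall>i<d. \<forall>j<d. mmult d B B i j = mmult d (adj M) M i j"
  shows "B = spectral_sum d u (\<lambda>i. \<bar>lam i\<bar>)"
proof -
  have u0: "\<forall>i<d. \<forall>k. d \<le> k \<longrightarrow> u i k = 0" and u: "orthonormal d u"
    and M_eq: "M = spectral_sum d u lam"
    using sd unfolding spectral_decomposition_def by auto
  have "mmult d (adj M) M = spectral_sum d u (\<lambda>i. (\<bar>lam i\<bar>)\<^sup>2)"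
    unfolding adj_hermitian[OF M] by (subst (1 2) M_eq) (simp add: spectral_sum_mult[OF u] power2_eq_square)
  hence B2: "mat_vec d (mmult d B B) x a = mat_vec d (spectral_sum d u (\<lambda>i. (\<bar>lam i\<bar>)\<^sup>2)) x a"
    if "a < d" for x a
    unfolding mat_vec_def using BB that by simp
  show ?thesis
  proof (rule eq_spectral_sum_if_eigenbasis[OF _ u u0])
    show "supported d B" using B unfolding psd_def by blast
  next
    fix i a assume "i < d" "a < d"
    with psd_mat_vec_eq_of_square[OF B abs_ge_zero] B2 mat_vec_spectral_sum_basis[OF u]
    show "mat_vec d B (u i) a = complex_of_real \<bar>lam i\<bar> * u i a" by simp
  next
    fix w a assume "\<forall>i<d. cinner d (u i) w = 0" "a < d"
    with psd_mat_vec_eq_of_square[OF B order_refl, of w] B2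
    show "mat_vec d B w a = 0" by (simp add: mat_vec_spectral_sum)
  qed
qed

lemma the_psd_sqrt:
  assumes M: "hermitian d M" and B: "psd d B"
    and BB: "\<forall>i<d. \<forall>j<d. mmult d B B i j = mmult d (adj M) M i j"
  shows "(THE B. psd d B \<and> (\<forall>i<d. \<forall>j<d. mmult d B B i j = mmult d (adj M) M i j)) = B"
proof (rule the_equality)
  obtain u lam where sd: "spectral_decomposition d M u lam"
    using hermitian_spectral_decomposition[OF M] by blast
  fix B' assume "psd d B' \<and> (\<forall>i<d. \<forall>j<d. mmult d B' B' i j = mmult d (adj M) M i j)"
  thus "B' = B" using psd_sqrt_unique[OF M sd] B BB by metis
qed (use B BB in blast)

lemma trace_norm_spectral_decomposition:
  assumes M: "hermitian d M" and sd: "spectral_decomposition d M u lam"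
  shows "trace_norm d M = (\<Sum>a<d. \<Sum>i<d. \<bar>lam i\<bar> * (cmod (u i a))\<^sup>2)"
proof -
  have u0: "\<forall>i<d. \<forall>k. d \<le> k \<longrightarrow> u i k = 0" and u: "orthonormal d u"
    and M_eq: "M = spectral_sum d u lam"
    using sd unfolding spectral_decomposition_def by auto
  have "mmult d (adj M) M = spectral_sum d u (\<lambda>i. \<bar>lam i\<bar> * \<bar>lam i\<bar>)"
    unfolding adj_hermitian[OF M] by (subst (1 2) M_eq) (simp add: spectral_sum_mult[OF u])
  hence "trace_norm d M = Re (\<Sum>a<d. spectral_sum d u (\<lambda>i. \<bar>lam i\<bar>) a a)"
    unfolding trace_norm_def
    by (subst the_psd_sqrt[OF M psd_spectral_sum[OF u0 abs_ge_zero]]) (simp_all add: spectral_sum_mult[OF u])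
  also have "\<dots> = (\<Sum>a<d. \<Sum>i<d. \<bar>lam i\<bar> * (cmod (u i a))\<^sup>2)"
    unfolding spectral_sum_def by (simp add: Re_sum mult.assoc complex_norm_square[symmetric] flip: of_real_mult)
  finally show ?thesis .
qed

text \<open>The weights \<open>\<beta>\<close> are the diagonal entries of \<open>|M|\<close>.\<close>

lemma trace_norm_diagonal_bound:
  assumes M: "hermitian d M"
  shows "\<exists>\<beta>. (\<forall>k. 0 \<le> \<beta> k) \<and> trace_norm d M = (\<Sum>k<d. \<beta> k) \<and>
    (\<forall>x y. cmod (M x y) \<le> (\<beta> x + \<beta> y) / 2)"
proof -
  obtain u lam where sd: "spectral_decomposition d M u lam"
    using hermitian_spectral_decomposition[OF M] by blast
  define \<beta> where "\<beta> = (\<lambda>a. \<Sum>i<d. \<bar>lam i\<bar> * (cmod (u i a))\<^sup>2)"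
  have "cmod (M x y) \<le> (\<beta> x + \<beta> y) / 2" for x y
  proof -
    have "cmod (M x y) \<le> (\<Sum>i<d. cmod (complex_of_real (lam i) * u i x * cnj (u i y)))"
      using sd unfolding spectral_decomposition_def spectral_sum_def by (simp add: norm_sum)
    also have "\<dots> \<le> (\<Sum>i<d. \<bar>lam i\<bar> * (((cmod (u i x))\<^sup>2 + (cmod (u i y))\<^sup>2) / 2))"
    proof (rule sum_mono)
      fix i
      have "cmod (u i x) * cmod (u i y) \<le> ((cmod (u i x))\<^sup>2 + (cmod (u i y))\<^sup>2) / 2"
        using sum_squares_bound[of "cmod (u i x)" "cmod (u i y)"] by (simp add: power2_eq_square)
      thus "cmod (complex_of_real (lam i) * u i x * cnj (u i y))
          \<le> \<bar>lam i\<bar> * (((cmod (u i x))\<^sup>2 + (cmod (u i y))\<^sup>2) / 2)"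
        by (simp add: norm_mult mult.assoc mult_left_mono)
    qed
    also have "\<dots> = (\<beta> x + \<beta> y) / 2"
      unfolding \<beta>_def sum_divide_distrib sum.distrib[symmetric] by (rule sum.cong) (auto simp: algebra_simps)
    finally show ?thesis .
  qed
  moreover have "trace_norm d M = (\<Sum>k<d. \<beta> k)"
    unfolding \<beta>_def by (rule trace_norm_spectral_decomposition[OF M sd])
  ultimately show ?thesis unfolding \<beta>_def by (intro exI[of _ \<beta>]) (auto simp: \<beta>_def intro: sum_nonneg)
qed

lemma trace_norm_nonneg: "hermitian d M \<Longrightarrow> 0 \<le> trace_norm d M"
  using trace_norm_diagonal_bound[of d M] by (metis sum_nonneg)

lemma trace_norm_zero: "trace_norm d (\<lambda>i j. 0) = 0"
proof -
  have "hermitian d (\<lambda>i j. 0)" "psd d (\<lambda>i j. 0)"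
    unfolding hermitian_def psd_def supported_def by simp_all
  from the_psd_sqrt[OF this] show ?thesis unfolding trace_norm_def mmult_def adj_def by simp
qed

text \<open>The reduced state of the last qubit, for an operator on \<open>\<complex>\<^sup>h \<otimes> \<complex>\<^sup>2\<close> (index \<open>2 c + a\<close>).\<close>

definition last_qubit :: "nat \<Rightarrow> cmat \<Rightarrow> cmat" where
  "last_qubit h M = (\<lambda>a b. \<Sum>c<h. M (2 * c + a) (2 * c + b))"

lemma sum_lessThan_double: "(\<Sum>k<2 * h. g k) = (\<Sum>c<h. g (2 * c) + g (2 * c + 1))" for h :: nat
  by (induction h) (simp_all add: ac_simps)

lemma cmod_last_qubit_le_trace_norm:
  assumes M: "hermitian (2 * h) M" and "a < 2" "b < 2"
  shows "cmod (last_qubit h M a b) \<le> trace_norm (2 * h) M"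
proof -
  obtain \<beta> where \<beta>0: "\<forall>k. 0 \<le> \<beta> k" and tn: "trace_norm (2 * h) M = (\<Sum>k<2 * h. \<beta> k)"
    and M\<beta>: "\<forall>x y. cmod (M x y) \<le> (\<beta> x + \<beta> y) / 2"
    using trace_norm_diagonal_bound[OF M] by blast
  have \<beta>_le: "\<beta> (2 * c + a) \<le> \<beta> (2 * c) + \<beta> (2 * c + 1)" if "a < 2" for a c
    using \<beta>0 that by (cases a) (auto simp: add_increasing2 add_increasing)
  have "cmod (last_qubit h M a b) \<le> (\<Sum>c<h. cmod (M (2 * c + a) (2 * c + b)))"
    unfolding last_qubit_def by (rule norm_sum)
  also have "\<dots> \<le> (\<Sum>c<h. \<beta> (2 * c) + \<beta> (2 * c + 1))"
  proof (rule sum_mono)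
    fix c
    show "cmod (M (2 * c + a) (2 * c + b)) \<le> \<beta> (2 * c) + \<beta> (2 * c + 1)"
      using M\<beta>[rule_format, of "2 * c + a" "2 * c + b"] \<beta>_le[OF assms(2), of c] \<beta>_le[OF assms(3), of c]
      by (simp add: field_simps)
  qed
  also have "\<dots> = trace_norm (2 * h) M" unfolding tn sum_lessThan_double ..
  finally show ?thesis .
qed

definition offdiag_dominated :: "real \<Rightarrow> real \<Rightarrow> cmat \<Rightarrow> bool" where
  "offdiag_dominated u w X \<longleftrightarrow> (\<forall>k. 0 \<le> Re (X k k)) \<and>
     (\<forall>k l. k \<noteq> l \<longrightarrow> cmod (X k l) \<le> u * Re (X k k) + w * Re (X l l))"

lemma offdiag_dominated_sum:
  assumes "\<forall>x\<in>I. offdiag_dominated u w (Y x)"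
  shows "offdiag_dominated u w (\<lambda>i j. \<Sum>x\<in>I. Y x i j)"
  unfolding offdiag_dominated_def
proof (intro conjI allI impI)
  fix k show "0 \<le> Re (\<Sum>x\<in>I. Y x k k)"
    using assms unfolding offdiag_dominated_def Re_sum by (simp add: sum_nonneg)
next
  fix k l :: nat assume "k \<noteq> l"
  hence "cmod (\<Sum>x\<in>I. Y x k l) \<le> (\<Sum>x\<in>I. u * Re (Y x k k) + w * Re (Y x l l))"
    using assms unfolding offdiag_dominated_def by (intro order_trans[OF norm_sum sum_mono]) auto
  thus "cmod (\<Sum>x\<in>I. Y x k l) \<le> u * Re (\<Sum>x\<in>I. Y x k k) + w * Re (\<Sum>x\<in>I. Y x l l)"
    by (simp add: Re_sum sum.distrib sum_distrib_left)
qed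

lemma offdiag_dominated_scale:
  assumes "offdiag_dominated u w Y" and "0 \<le> c"
  shows "offdiag_dominated u w (\<lambda>i j. complex_of_real c * Y i j)"
  unfolding offdiag_dominated_def
proof (intro conjI allI impI)
  fix k show "0 \<le> Re (complex_of_real c * Y k k)" using assms by (simp add: offdiag_dominated_def)
next
  fix k l :: nat assume "k \<noteq> l"
  hence "c * cmod (Y k l) \<le> c * (u * Re (Y k k) + w * Re (Y l l))"
    using assms by (intro mult_left_mono) (auto simp: offdiag_dominated_def)
  thus "cmod (complex_of_real c * Y k l)
      \<le> u * Re (complex_of_real c * Y k k) + w * Re (complex_of_real c * Y l l)"
    using assms(2) by (simp add: norm_mult algebra_simps)
qed

text \<open>A single term \<open>U \<Pi> X \<Pi> U\<^sup>\<dagger>\<close> of a PIO, for the incoherent projector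
  \<open>\<Pi> = \<Sum>\<^bsub>P k\<^esub> |k\<rangle>\<langle>k|\<close> and the incoherent unitary \<open>U = \<Sum>\<^sub>k ph k |S k\<rangle>\<langle>k|\<close>.\<close>

definition pio_branch ::
    "nat \<Rightarrow> (nat \<Rightarrow> nat) \<Rightarrow> (nat \<Rightarrow> bool) \<Rightarrow> (nat \<Rightarrow> complex) \<Rightarrow> cmat \<Rightarrow> cmat" where
  "pio_branch N S P ph X = (\<lambda>i j. \<Sum>k<N. \<Sum>l<N.
     if S k = i \<and> S l = j \<and> P k \<and> P l then ph k * X k l * cnj (ph l) else 0)"

lemma pio_apply_eq_sum_branches:
  "pio_apply N K p blk \<sigma> \<phi> X = (\<lambda>i j. \<Sum>\<alpha><K. complex_of_real (p \<alpha>) *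
     (\<Sum>\<beta>\<in>blk \<alpha> ` {..<N}. pio_branch N (\<sigma> \<alpha> \<beta>) (\<lambda>k. blk \<alpha> k = \<beta>) (\<phi> \<alpha> \<beta>) X i j))"
  unfolding pio_apply_def pio_branch_def ..

lemma pio_branch_eq_sum_fibers:
  "pio_branch N S P ph X i j =
     (\<Sum>k\<in>{k\<in>{..<N}. S k = i \<and> P k}. \<Sum>l\<in>{l\<in>{..<N}. S l = j \<and> P l}. ph k * X k l * cnj (ph l))"
proof -
  have "pio_branch N S P ph X i j = (\<Sum>k<N. if S k = i \<and> P k then
      (\<Sum>l<N. if S l = j \<and> P l then ph k * X k l * cnj (ph l) else 0) else 0)"
    unfolding pio_branch_def by (intro sum.cong refl) auto
  thus ?thesis by (simp only: sum.inter_filter[OF finite_lessThan])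
qed

lemma inj_on_fiber_subsingleton:
  assumes "inj_on S {..<N}"
  obtains "{k\<in>{..<N}. S k = i \<and> P k} = {}" | k where "{k\<in>{..<N}. S k = i \<and> P k} = {k}"
proof (cases "{k\<in>{..<N}. S k = i \<and> P k} = {}")
  case False
  then obtain k where k: "k \<in> {k\<in>{..<N}. S k = i \<and> P k}" by blast
  hence "{k\<in>{..<N}. S k = i \<and> P k} = {k}" using assms unfolding inj_on_def by auto
  thus thesis by (rule that(2))
qed (rule that(1))

lemma pio_branch_diag:
  assumes "inj_on S {..<N}" and "\<forall>k. cmod (ph k) = 1"
  shows "pio_branch N S P ph X i i = (\<Sum>k\<in>{k\<in>{..<N}. S k = i \<and> P k}. X k k)"
proof (cases rule: inj_on_fiber_subsingleton[OF assms(1), of i P])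
  case 1
  show ?thesis unfolding pio_branch_eq_sum_fibers 1 by simp
next
  case (2 k)
  have "ph k * X k k * cnj (ph k) = X k k" using assms(2) cnj_mult_self[of "ph k"] by (simp add: ac_simps)
  thus ?thesis unfolding pio_branch_eq_sum_fibers 2 by simp
qed

lemma offdiag_dominated_pio_branch:
  assumes inj: "inj_on S {..<N}" and ph: "\<forall>k. cmod (ph k) = 1"
    and uw: "0 \<le> u" "0 \<le> w" and X: "offdiag_dominated u w X"
  shows "offdiag_dominated u w (pio_branch N S P ph X)"
proof -
  have diag: "Re (pio_branch N S P ph X i i) = (\<Sum>k\<in>{k\<in>{..<N}. S k = i \<and> P k}. Re (X k k))" for i
    unfolding pio_branch_diag[OF inj ph] Re_sum ..
  have diag_nonneg: "0 \<le> Re (pio_branch N S P ph X i i)" for i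
    unfolding diag using X unfolding offdiag_dominated_def by (simp add: sum_nonneg)
  have "cmod (pio_branch N S P ph X i j)
      \<le> u * Re (pio_branch N S P ph X i i) + w * Re (pio_branch N S P ph X j j)" if "i \<noteq> j" for i j
  proof (cases rule: inj_on_fiber_subsingleton[OF inj, of i P])
    case 1
    hence "pio_branch N S P ph X i j = 0" unfolding pio_branch_eq_sum_fibers 1 by simp
    thus ?thesis using diag_nonneg uw by simp
  next
    case (2 k)
    note Fi = this
    show ?thesis
    proof (cases rule: inj_on_fiber_subsingleton[OF inj, of j P])
      case 1
      hence "pio_branch N S P ph X i j = 0" unfolding pio_branch_eq_sum_fibers 1 by simp
      thus ?thesis using diag_nonneg uw by simp
    next
      case (2 l)
      note Fj = this
      have "S k = i" "S l = j" using Fi Fj by blast+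
      hence "cmod (X k l) \<le> u * Re (X k k) + w * Re (X l l)"
        using X that unfolding offdiag_dominated_def by metis
      moreover have "pio_branch N S P ph X i j = ph k * X k l * cnj (ph l)"
        unfolding pio_branch_eq_sum_fibers Fi Fj by simp
      ultimately show ?thesis unfolding diag Fi Fj using ph by (simp add: norm_mult)
    qed
  qed
  thus ?thesis using diag_nonneg unfolding offdiag_dominated_def by blast
qed

lemma pio_branch_cnj:
  assumes "\<forall>k l. X k l = cnj (X l k)"
  shows "pio_branch N S P ph X i j = cnj (pio_branch N S P ph X j i)"
proof -
  have X: "cnj (X k l) = X l k" for k l using assms by (metis complex_cnj_cnj)
  have "cnj (pio_branch N S P ph X j i) = (\<Sum>k<N. \<Sum>l<N.
      if S l = i \<and> S k = j \<and> P l \<and> P k then ph l * X l k * cnj (ph k) else 0)"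
    unfolding pio_branch_def cnj_sum by (intro sum.cong refl) (auto simp: X ac_simps)
  also have "\<dots> = pio_branch N S P ph X i j" unfolding pio_branch_def by (rule sum.swap)
  finally show ?thesis ..
qed

lemma PIO_hermitian:
  assumes "PIO din dout \<Lambda>" and X: "hermitian din X"
  shows "hermitian dout (\<Lambda> X)"
proof -
  have sX: "supported din X" and hX: "\<forall>k l. X k l = cnj (X l k)"
    using X unfolding hermitian_def by (rule conjunct1, rule conjunct2)
  obtain N K p blk \<sigma> \<phi> where supp: "supported dout (pio_apply N K p blk \<sigma> \<phi> X)"
    and \<Lambda>: "\<Lambda> X = pio_apply N K p blk \<sigma> \<phi> X"
    using assms(1) sX unfolding PIO_def by blast
  have "pio_apply N K p blk \<sigma> \<phi> X i j = cnj (pio_apply N K p blk \<sigma> \<phi> X j i)" for i j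
    unfolding pio_apply_eq_sum_branches cnj_sum complex_cnj_mult complex_cnj_complex_of_real
    by (intro sum.cong refl arg_cong2[where f="(*)"] pio_branch_cnj[OF hX])
  with supp show ?thesis unfolding hermitian_def \<Lambda> by blast
qed

lemma PIO_offdiag_dominated:
  assumes "PIO din dout \<Lambda>" and "supported din X"
    and uw: "0 \<le> u" "0 \<le> w" and X: "offdiag_dominated u w X"
  shows "offdiag_dominated u w (\<Lambda> X)"
proof -
  obtain N K p blk \<sigma> \<phi> where p: "\<forall>\<alpha><K. 0 \<le> p \<alpha>" and \<sigma>: "\<forall>\<alpha> \<beta>. \<sigma> \<alpha> \<beta> permutes {..<N}"
    and \<phi>: "\<forall>\<alpha> \<beta> k. cmod (\<phi> \<alpha> \<beta> k) = 1" and \<Lambda>: "\<Lambda> X = pio_apply N K p blk \<sigma> \<phi> X"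
    using assms(1,2) unfolding PIO_def by blast
  have "offdiag_dominated u w (pio_branch N (\<sigma> \<alpha> \<beta>) (\<lambda>k. blk \<alpha> k = \<beta>) (\<phi> \<alpha> \<beta>) X)" for \<alpha> \<beta>
    using permutes_inj_on[OF \<sigma>[rule_format]] \<phi> by (intro offdiag_dominated_pio_branch[OF _ _ uw X]) auto
  hence "offdiag_dominated u w (\<lambda>i j. complex_of_real (p \<alpha>) *
      (\<Sum>\<beta>\<in>blk \<alpha> ` {..<N}. pio_branch N (\<sigma> \<alpha> \<beta>) (\<lambda>k. blk \<alpha> k = \<beta>) (\<phi> \<alpha> \<beta>) X i j))"
    if "\<alpha> < K" for \<alpha>
    using p that by (intro offdiag_dominated_scale offdiag_dominated_sum) auto
  thus ?thesis unfolding \<Lambda> pio_apply_eq_sum_branches by (intro offdiag_dominated_sum) auto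
qed

definition dephase_mod :: "nat \<Rightarrow> nat \<Rightarrow> cmat \<Rightarrow> cmat" where
  "dephase_mod N d = pio_apply N 1 (\<lambda>_. 1) (\<lambda>_ k. k)
     (\<lambda>_ \<beta>. if \<beta> < N then Transposition.transpose \<beta> (\<beta> mod d) else id) (\<lambda>_ _ _. 1)"

lemma dephase_mod_apply:
  assumes "0 < d"
  shows "dephase_mod N d X i j = (\<Sum>\<beta><N. if \<beta> mod d = i \<and> \<beta> mod d = j then X \<beta> \<beta> else 0)"
proof -
  let ?\<sigma> = "\<lambda>\<beta>. if \<beta> < N then Transposition.transpose \<beta> (\<beta> mod d) else id"
  have "pio_branch N (?\<sigma> \<beta>) (\<lambda>k. k = \<beta>) (\<lambda>_. 1) X i j
      = (if \<beta> mod d = i \<and> \<beta> mod d = j then X \<beta> \<beta> else 0)" if "\<beta> < N" for \<beta>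
  proof -
    have "{k\<in>{..<N}. ?\<sigma> \<beta> k = i \<and> k = \<beta>} = (if \<beta> mod d = i then {\<beta>} else {})" for i
      using that by auto
    thus ?thesis unfolding pio_branch_eq_sum_fibers by simp
  qed
  thus ?thesis unfolding dephase_mod_def pio_apply_eq_sum_branches by simp
qed

lemma PIO_dephase_mod:
  assumes "0 < dout"
  shows "PIO din dout (dephase_mod (max din dout) dout)"
proof -
  let ?N = "max din dout"
  let ?\<sigma> = "\<lambda>_ \<beta>. if \<beta> < ?N then Transposition.transpose \<beta> (\<beta> mod dout) else id"
  have "?\<sigma> \<alpha> \<beta> permutes {..<?N}" for \<alpha> \<beta> :: nat
  proof (cases "\<beta> < ?N")
    case True
    moreover have "\<beta> mod dout \<le> \<beta>" by simp
    ultimately have "\<beta> mod dout < ?N" by linarith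
    thus ?thesis using True permutes_swap_id[of \<beta> "{..<?N}" "\<beta> mod dout"] by simp
  qed (simp add: permutes_id)
  moreover have "supported dout (dephase_mod ?N dout X)" for X
    unfolding supported_def dephase_mod_apply[OF assms]
  proof (intro allI impI)
    fix i j :: nat assume "dout \<le> i \<or> dout \<le> j"
    moreover have "\<beta> mod dout < dout" for \<beta> using assms by simp
    ultimately show "(\<Sum>\<beta><?N. if \<beta> mod dout = i \<and> \<beta> mod dout = j then X \<beta> \<beta> else 0) = 0"
      by (intro sum.neutral) (auto dest: leD)
  qed
  ultimately show ?thesis unfolding PIO_def dephase_mod_def
    by (intro exI[of _ ?N] exI[of _ 1] exI[of _ "\<lambda>_. 1"] exI[of _ "\<lambda>_ k. k"] exI[of _ ?\<sigma>]
        exI[of _ "\<lambda>_ _ _. 1"]) auto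
qed

lemma tpow_Suc_apply: "tpow A (Suc n) i j = tpow A n (i div 2) (j div 2) * A (i mod 2) (j mod 2)"
  by (simp add: tensor_def)

lemma supported_tpow: "supported (2 ^ n) (tpow A n)"
proof (induction n)
  case 0
  thus ?case by (simp add: supported_def one_dim_def)
next
  case (Suc n)
  have "2 ^ n \<le> i div 2 \<or> 2 ^ n \<le> j div 2" if "2 ^ Suc n \<le> i \<or> 2 ^ Suc n \<le> j" for i j :: nat
    using that by auto
  thus ?case using Suc.IH unfolding supported_def tpow_Suc_apply by auto
qed

lemma hermitian_tpow:
  assumes "\<forall>a b. A a b = cnj (A b a)"
  shows "hermitian (2 ^ n) (tpow A n)"
proof -
  have "tpow A n i j = cnj (tpow A n j i)" for i j
  proof (induction n arbitrary: i j)
    case (Suc n)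
    show ?case unfolding tpow_Suc_apply complex_cnj_mult
      using Suc.IH assms by (intro arg_cong2[where f="(*)"]) blast+
  qed (simp add: one_dim_def)
  thus ?thesis unfolding hermitian_def using supported_tpow by blast
qed

lemma sum_diag_tpow:
  assumes "A 0 0 + A 1 1 = 1"
  shows "(\<Sum>k<2 ^ n. tpow A n k k) = 1"
proof (induction n)
  case (Suc n)
  have "(\<Sum>k<2 ^ Suc n. tpow A (Suc n) k k)
      = (\<Sum>c<2 ^ n. tpow A (Suc n) (2 * c) (2 * c) + tpow A (Suc n) (2 * c + 1) (2 * c + 1))"
    using sum_lessThan_double[of "\<lambda>k. tpow A (Suc n) k k" "2 ^ n"] by simp
  also have "\<dots> = (\<Sum>c<2 ^ n. tpow A n c c * (A 0 0 + A 1 1))"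
  proof (intro sum.cong refl)
    fix c :: nat
    have "(2 * c) div 2 = c" "(2 * c) mod 2 = 0" "(2 * c + 1) div 2 = c" "(2 * c + 1) mod 2 = 1" by auto
    thus "tpow A (Suc n) (2 * c) (2 * c) + tpow A (Suc n) (2 * c + 1) (2 * c + 1) = tpow A n c c * (A 0 0 + A 1 1)"
      unfolding tpow_Suc_apply by (simp add: algebra_simps)
  qed
  finally show ?case using Suc.IH assms by (simp flip: sum_distrib_right)
qed (simp add: one_dim_def)

lemma last_qubit_tpow:
  assumes "A 0 0 + A 1 1 = 1" and "a < 2" "b < 2"
  shows "last_qubit (2 ^ n) (tpow A (Suc n)) a b = A a b"
proof -
  have "last_qubit (2 ^ n) (tpow A (Suc n)) a b = (\<Sum>c<2 ^ n. tpow A n c c) * A a b"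
    unfolding last_qubit_def tpow_Suc_apply sum_distrib_right using assms(2,3) by (intro sum.cong refl) auto
  thus ?thesis unfolding sum_diag_tpow[where A = A and n = n, OF assms(1)] by simp
qed

definition coherence_ratio_le :: "real \<Rightarrow> cmat \<Rightarrow> bool" where
  "coherence_ratio_le s A \<longleftrightarrow> (\<forall>a. A a a = complex_of_real (Re (A a a)) \<and> 0 \<le> Re (A a a)) \<and>
     (\<forall>a b. a \<noteq> b \<longrightarrow> cmod (A a b) \<le> s * sqrt (Re (A a a) * Re (A b b)))"

lemma coherence_ratio_le_entry:
  assumes "coherence_ratio_le s A"
  shows "cmod (A a b) \<le> (if a = b then 1 else s) * sqrt (Re (A a a) * Re (A b b))"
proof (cases "a = b")
  case True
  have "A a a = complex_of_real (Re (A a a))" "0 \<le> Re (A a a)"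
    using assms unfolding coherence_ratio_le_def by blast+
  hence "cmod (A a a) = Re (A a a)" by (metis abs_of_nonneg norm_of_real)
  thus ?thesis using True \<open>0 \<le> Re (A a a)\<close> by simp
qed (use assms coherence_ratio_le_def in auto)

text \<open>For \<open>k \<noteq> l\<close> at least one of the two tensor factors is off-diagonal and contributes the
  factor \<open>s\<close>; the other contributes at most \<open>1\<close>.\<close>

lemma coherence_ratio_le_tpow:
  assumes s: "0 \<le> s" "s \<le> 1" and A: "coherence_ratio_le s A"
  shows "coherence_ratio_le s (tpow A n)"
proof (induction n)
  case 0
  show ?case unfolding coherence_ratio_le_def by (auto simp: one_dim_def)
next
  case (Suc n)
  let ?T = "tpow A n" and ?d = "\<lambda>X k. Re (X k k)"
  have diag: "tpow A (Suc n) k k = complex_of_real (?d ?T (k div 2) * ?d A (k mod 2))"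
    and diag_nonneg: "0 \<le> ?d ?T (k div 2) * ?d A (k mod 2)" for k
    using Suc.IH A unfolding coherence_ratio_le_def tpow_Suc_apply
    by (metis of_real_mult, simp)
  have "cmod (tpow A (Suc n) k l) \<le> s * sqrt (?d (tpow A (Suc n)) k * ?d (tpow A (Suc n)) l)"
    if "k \<noteq> l" for k l
  proof -
    define c1 where "c1 = (if k div 2 = l div 2 then 1 else s)"
    define c2 where "c2 = (if k mod 2 = l mod 2 then 1 else s)"
    have "c1 * c2 \<le> s"
    proof -
      have "k div 2 \<noteq> l div 2 \<or> k mod 2 \<noteq> l mod 2"
        using that by (metis div_mult_mod_eq)
      thus ?thesis unfolding c1_def c2_def using s by (auto simp: mult_left_le)
    qed
    have "cmod (tpow A (Suc n) k l) = cmod (?T (k div 2) (l div 2)) * cmod (A (k mod 2) (l mod 2))"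
      unfolding tpow_Suc_apply by (simp add: norm_mult)
    also have "\<dots> \<le> (c1 * sqrt (?d ?T (k div 2) * ?d ?T (l div 2)))
        * (c2 * sqrt (?d A (k mod 2) * ?d A (l mod 2)))"
      unfolding c1_def c2_def using s Suc.IH unfolding coherence_ratio_le_def
      by (intro mult_mono coherence_ratio_le_entry[OF Suc.IH] coherence_ratio_le_entry[OF A]) auto
    also have "\<dots> = (c1 * c2) * sqrt (?d (tpow A (Suc n)) k * ?d (tpow A (Suc n)) l)"
      unfolding diag by (simp add: real_sqrt_mult ac_simps)
    also have "\<dots> \<le> s * sqrt (?d (tpow A (Suc n)) k * ?d (tpow A (Suc n)) l)"
      using \<open>c1 * c2 \<le> s\<close> diag_nonneg unfolding diag by (intro mult_right_mono) auto
    finally show ?thesis .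
  qed
  thus ?case unfolding coherence_ratio_le_def using diag diag_nonneg by simp
qed

lemma coherence_ratio_le_imp_offdiag_dominated:
  assumes "0 \<le> s" and X: "coherence_ratio_le s X"
  shows "offdiag_dominated (s / 2) (s / 2) X"
  unfolding offdiag_dominated_def
proof (intro conjI allI impI)
  fix k show "0 \<le> Re (X k k)" using X unfolding coherence_ratio_le_def by blast
next
  fix k l :: nat assume "k \<noteq> l"
  have "cmod (X k l) \<le> s * sqrt (Re (X k k) * Re (X l l))"
    using X \<open>k \<noteq> l\<close> unfolding coherence_ratio_le_def by blast
  also have "\<dots> \<le> s * ((Re (X k k) + Re (X l l)) / 2)"
    using X assms(1) unfolding coherence_ratio_le_def by (intro mult_left_mono arith_geo_mean_sqrt) auto
  finally show "cmod (X k l) \<le> s / 2 * Re (X k k) + s / 2 * Re (X l l)" by (simp add: algebra_simps)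
qed

lemma hermitian_Psi: "hermitian D (Psi D)"
  unfolding hermitian_def supported_def Psi_def by auto

lemma offdiag_dominated_Psi: "offdiag_dominated 1 0 (Psi D)" "offdiag_dominated 0 1 (Psi D)"
  unfolding offdiag_dominated_def Psi_def by (auto simp: norm_divide)

lemma last_qubit_Psi:
  assumes "0 < h" "a < 2" "b < 2"
  shows "last_qubit h (Psi (2 * h)) a b = 1 / 2"
proof -
  have "last_qubit h (Psi (2 * h)) a b = (\<Sum>c<h. complex_of_real (1 / (2 * h)))"
    unfolding last_qubit_def Psi_def using assms(2,3) by (intro sum.cong refl) auto
  thus ?thesis using assms(1) by simp
qed

lemma offdiag_dominated_last_qubit:
  assumes "offdiag_dominated u w Y"
  shows "cmod (last_qubit h Y 0 1) \<le> u * Re (last_qubit h Y 0 0) + w * Re (last_qubit h Y 1 1)"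
proof -
  have "cmod (last_qubit h Y 0 1) \<le> (\<Sum>c<h. u * Re (Y (2 * c) (2 * c)) + w * Re (Y (2 * c + 1) (2 * c + 1)))"
    unfolding last_qubit_def using assms unfolding offdiag_dominated_def
    by (intro order_trans[OF norm_sum sum_mono]) auto
  thus ?thesis unfolding last_qubit_def by (simp add: Re_sum sum.distrib sum_distrib_left)
qed

lemma offdiag_dominated_qubit_distance:
  fixes F G :: cmat
  assumes uw: "0 \<le> u" "0 \<le> w" and F: "cmod (F 0 1) \<le> u * Re (F 0 0) + w * Re (F 1 1)"
    and FG: "\<And>a b. a < 2 \<Longrightarrow> b < 2 \<Longrightarrow> cmod (F a b - G a b) \<le> \<delta>"
  shows "cmod (G 0 1) - u * Re (G 0 0) - w * Re (G 1 1) \<le> (1 + u + w) * \<delta>"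
proof -
  have "Re (F a a) \<le> Re (G a a) + \<delta>" if "a < 2" for a
    using FG[OF that that] complex_Re_le_cmod[of "F a a - G a a"] by simp
  hence "u * Re (F 0 0) + w * Re (F 1 1) \<le> u * (Re (G 0 0) + \<delta>) + w * (Re (G 1 1) + \<delta>)"
    using uw by (intro add_mono mult_left_mono) auto
  moreover have "cmod (G 0 1) \<le> cmod (F 0 1) + \<delta>"
    using norm_triangle_sub[of "G 0 1" "F 0 1"] norm_minus_commute[of "G 0 1" "F 0 1"] FG[of 0 1] by simp
  ultimately show ?thesis using F by (simp add: algebra_simps)
qed

lemma PIO_last_qubit_distance:
  assumes \<Lambda>: "PIO din (2 * h) \<Lambda>" and X: "hermitian din X"
    and uw: "0 \<le> u" "0 \<le> w" and Xu: "offdiag_dominated u w X" and T: "hermitian (2 * h) T"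
  shows "cmod (last_qubit h T 0 1) - u * Re (last_qubit h T 0 0) - w * Re (last_qubit h T 1 1)
    \<le> (1 + u + w) * trace_norm (2 * h) (\<lambda>i j. \<Lambda> X i j - T i j)"
proof (rule offdiag_dominated_qubit_distance[OF uw])
  have "supported din X" using X unfolding hermitian_def by (rule conjunct1)
  show "cmod (last_qubit h (\<Lambda> X) 0 1)
      \<le> u * Re (last_qubit h (\<Lambda> X) 0 0) + w * Re (last_qubit h (\<Lambda> X) 1 1)"
    by (rule offdiag_dominated_last_qubit[OF PIO_offdiag_dominated[OF \<Lambda> \<open>supported din X\<close> uw Xu]])
  fix a b :: nat assume "a < 2" "b < 2"
  have "last_qubit h (\<lambda>i j. \<Lambda> X i j - T i j) a b = last_qubit h (\<Lambda> X) a b - last_qubit h T a b"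
    unfolding last_qubit_def by (rule sum_subtractf)
  with cmod_last_qubit_le_trace_norm[OF hermitian_diff[OF PIO_hermitian[OF \<Lambda> X] T] \<open>a < 2\<close> \<open>b < 2\<close>]
  show "cmod (last_qubit h (\<Lambda> X) a b - last_qubit h T a b) \<le> trace_norm (2 * h) (\<lambda>i j. \<Lambda> X i j - T i j)"
    by simp
qed

lemma distillation_error_lower_bound:
  assumes s: "0 \<le> s" "s < 1" and A: "\<forall>a b. A a b = cnj (A b a)" "coherence_ratio_le s A"
    and \<Lambda>: "PIO (2 ^ n) (2 ^ Suc m) \<Lambda>"
  shows "(1 - s) / (2 * (1 + s)) \<le> trace_norm (2 ^ Suc m) (\<lambda>i j. \<Lambda> (tpow A n) i j - Psi (2 ^ Suc m) i j)"
proof -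
  let ?\<delta> = "trace_norm (2 * 2 ^ m) (\<lambda>i j. \<Lambda> (tpow A n) i j - Psi (2 * 2 ^ m) i j)"
  let ?G = "last_qubit (2 ^ m) (Psi (2 * 2 ^ m))"
  have \<Lambda>': "PIO (2 ^ n) (2 * 2 ^ m) \<Lambda>" using \<Lambda> by simp
  have X: "offdiag_dominated (s / 2) (s / 2) (tpow A n)"
    using coherence_ratio_le_imp_offdiag_dominated coherence_ratio_le_tpow s A(2) by simp
  have "cmod (?G 0 1) - s / 2 * Re (?G 0 0) - s / 2 * Re (?G 1 1) \<le> (1 + s / 2 + s / 2) * ?\<delta>"
    using s by (intro PIO_last_qubit_distance[OF \<Lambda>' hermitian_tpow[OF A(1)] _ _ X hermitian_Psi]) auto
  hence "1 / 2 - s / 2 \<le> (s + 1) * ?\<delta>" by (simp add: last_qubit_Psi)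
  thus ?thesis using s by (simp add: field_simps)
qed

lemma dilution_error_lower_bound:
  assumes A: "\<forall>a b. A a b = cnj (A b a)" "A 0 0 + A 1 1 = 1" and \<Lambda>: "PIO D (2 ^ Suc n) \<Lambda>"
  shows "(cmod (A 0 1) - min (Re (A 0 0)) (Re (A 1 1))) / 2
    \<le> trace_norm (2 ^ Suc n) (\<lambda>i j. \<Lambda> (Psi D) i j - tpow A (Suc n) i j)"
proof -
  let ?\<delta> = "trace_norm (2 * 2 ^ n) (\<lambda>i j. \<Lambda> (Psi D) i j - tpow A (Suc n) i j)"
  have \<Lambda>': "PIO D (2 * 2 ^ n) \<Lambda>" using \<Lambda> by simp
  have T: "hermitian (2 * 2 ^ n) (tpow A (Suc n))" using hermitian_tpow[OF A(1), of "Suc n"] by simp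
  note bound = PIO_last_qubit_distance[OF \<Lambda>' hermitian_Psi _ _ _ T]
  have "cmod (A 0 1) - 1 * Re (A 0 0) - 0 * Re (A 1 1) \<le> (1 + 1 + 0) * ?\<delta>"
    "cmod (A 0 1) - 0 * Re (A 0 0) - 1 * Re (A 1 1) \<le> (1 + 0 + 1) * ?\<delta>"
    using bound[OF _ _ offdiag_dominated_Psi(1)] bound[OF _ _ offdiag_dominated_Psi(2)]
    by (simp_all del: tpow.simps add: last_qubit_tpow[where A = A, OF A(2)])
  thus ?thesis by simp
qed

definition distillation_error :: "cmat \<Rightarrow> real \<Rightarrow> nat \<Rightarrow> real" where
  "distillation_error \<rho> r n = Inf {trace_norm (2 ^ nat \<lfloor>r * real n\<rfloor>)
       (\<lambda>i j. \<Lambda> (tpow \<rho> n) i j - Psi (2 ^ nat \<lfloor>r * real n\<rfloor>) i j) | \<Lambda>.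
     PIO (2 ^ n) (2 ^ nat \<lfloor>r * real n\<rfloor>) \<Lambda>}"

definition dilution_error :: "cmat \<Rightarrow> real \<Rightarrow> nat \<Rightarrow> real" where
  "dilution_error \<rho> r n = Inf {trace_norm (2 ^ n)
       (\<lambda>i j. \<Lambda> (Psi (2 ^ nat \<lfloor>r * real n\<rfloor>)) i j - tpow \<rho> n i j) | \<Lambda>.
     PIO (2 ^ nat \<lfloor>r * real n\<rfloor>) (2 ^ n) \<Lambda>}"

lemma C_d_PIO_eq_Sup: "C_d_PIO \<rho> = Sup {ereal r | r. (distillation_error \<rho> r \<longlongrightarrow> 0) sequentially}"
  unfolding C_d_PIO_def distillation_error_def ..

lemma C_c_PIO_eq_Inf: "C_c_PIO \<rho> = Inf {ereal r | r. (dilution_error \<rho> r \<longlongrightarrow> 0) sequentially}"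
  unfolding C_c_PIO_def dilution_error_def ..

lemma PIO_exists: "0 < dout \<Longrightarrow> \<exists>\<Lambda>. PIO din dout \<Lambda>"
  using PIO_dephase_mod by blast

lemma le_Inf_PIO:
  fixes f :: "(cmat \<Rightarrow> cmat) \<Rightarrow> real"
  assumes "\<exists>\<Lambda>. PIO din dout \<Lambda>" and "\<And>\<Lambda>. PIO din dout \<Lambda> \<Longrightarrow> c \<le> f \<Lambda>"
  shows "c \<le> Inf {f \<Lambda> | \<Lambda>. PIO din dout \<Lambda>}"
  using assms by (intro cInf_greatest) auto

lemma distillation_error_rate_zero:
  assumes A: "\<forall>a b. A a b = cnj (A b a)" "A 0 0 + A 1 1 = 1"
  shows "distillation_error A 0 n = 0"
proof -
  let ?\<Lambda> = "dephase_mod (2 ^ n) 1"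
  have "PIO (2 ^ n) 1 ?\<Lambda>" using PIO_dephase_mod[of 1 "2 ^ n"] by simp
  moreover have "?\<Lambda> (tpow A n) i j = Psi 1 i j" for i j
    using dephase_mod_apply[of 1 "2 ^ n" "tpow A n" i j] sum_diag_tpow[where A = A and n = n, OF A(2)]
    by (auto simp: Psi_def)
  hence "trace_norm 1 (\<lambda>i j. ?\<Lambda> (tpow A n) i j - Psi 1 i j) = 0" using trace_norm_zero by simp
  moreover have "0 \<le> trace_norm 1 (\<lambda>i j. \<Lambda> (tpow A n) i j - Psi 1 i j)" if "PIO (2 ^ n) 1 \<Lambda>" for \<Lambda>
    using hermitian_diff[OF PIO_hermitian[OF that hermitian_tpow[OF A(1)]] hermitian_Psi]
    by (rule trace_norm_nonneg)
  ultimately show ?thesis unfolding distillation_error_def by (intro cInf_eq_minimum) auto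
qed

lemma distillation_error_lower_bound_eventually:
  assumes s: "0 \<le> s" "s < 1" and A: "\<forall>a b. A a b = cnj (A b a)" "coherence_ratio_le s A"
    and r: "0 < r"
  shows "\<forall>\<^sub>F n in sequentially. (1 - s) / (2 * (1 + s)) \<le> distillation_error A r n"
  unfolding eventually_sequentially
proof (intro exI allI impI)
  fix n assume "nat \<lceil>1 / r\<rceil> \<le> n"
  hence "1 \<le> r * real n" using r by (simp add: field_simps)
  hence "1 \<le> nat \<lfloor>r * real n\<rfloor>" by linarith
  then obtain m where m: "nat \<lfloor>r * real n\<rfloor> = Suc m" by (cases "nat \<lfloor>r * real n\<rfloor>") auto
  show "(1 - s) / (2 * (1 + s)) \<le> distillation_error A r n"
    unfolding distillation_error_def m
  proof (rule le_Inf_PIO[OF PIO_exists])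
    fix \<Lambda> assume "PIO (2 ^ n) (2 ^ Suc m) \<Lambda>"
    thus "(1 - s) / (2 * (1 + s))
        \<le> trace_norm (2 ^ Suc m) (\<lambda>i j. \<Lambda> (tpow A n) i j - Psi (2 ^ Suc m) i j)"
      by (rule distillation_error_lower_bound[OF s A])
  qed simp
qed

lemma C_d_PIO_eq_zero:
  assumes s: "0 \<le> s" "s < 1" and A: "\<forall>a b. A a b = cnj (A b a)" "coherence_ratio_le s A"
    "A 0 0 + A 1 1 = 1"
  shows "C_d_PIO A = 0"
  unfolding C_d_PIO_eq_Sup
proof (rule antisym)
  have "\<not> r > 0" if "(distillation_error A r \<longlongrightarrow> 0) sequentially" for r
  proof
    assume "r > 0"
    from tendsto_lowerbound[OF that distillation_error_lower_bound_eventually[OF s A(1,2) this]]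
    show False using s by (simp add: field_simps)
  qed
  thus "Sup {ereal r | r. (distillation_error A r \<longlongrightarrow> 0) sequentially} \<le> 0"
    by (intro Sup_least) (fastforce simp: not_less)
  have "distillation_error A 0 = (\<lambda>_. 0)" using distillation_error_rate_zero[OF A(1,3)] by (rule ext)
  hence "(distillation_error A 0 \<longlongrightarrow> 0) sequentially" by simp
  thus "0 \<le> Sup {ereal r | r. (distillation_error A r \<longlongrightarrow> 0) sequentially}"
    by (intro Sup_upper2[of 0]) (auto simp: zero_ereal_def)
qed

lemma C_c_PIO_eq_infinity:
  assumes A: "\<forall>a b. A a b = cnj (A b a)" "A 0 0 + A 1 1 = 1"
    and coh: "min (Re (A 0 0)) (Re (A 1 1)) < cmod (A 0 1)"
  shows "C_c_PIO A = \<infinity>"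
proof -
  let ?c = "(cmod (A 0 1) - min (Re (A 0 0)) (Re (A 1 1))) / 2"
  have "?c \<le> dilution_error A r n" if "1 \<le> n" for r n
  proof -
    obtain n' where n: "n = Suc n'" using \<open>1 \<le> n\<close> by (cases n) auto
    show ?thesis unfolding dilution_error_def n
    proof (rule le_Inf_PIO[OF PIO_exists])
      fix \<Lambda> assume "PIO (2 ^ nat \<lfloor>r * real (Suc n')\<rfloor>) (2 ^ Suc n') \<Lambda>"
      thus "?c \<le> trace_norm (2 ^ Suc n')
          (\<lambda>i j. \<Lambda> (Psi (2 ^ nat \<lfloor>r * real (Suc n')\<rfloor>)) i j - tpow A (Suc n') i j)"
        by (rule dilution_error_lower_bound[OF A])
    qed simp
  qed
  hence "\<forall>\<^sub>F n in sequentially. ?c \<le> dilution_error A r n" for r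
    unfolding eventually_sequentially by blast
  hence "\<not> (dilution_error A r \<longlongrightarrow> 0) sequentially" for r
    using tendsto_lowerbound[of "dilution_error A r" 0 sequentially ?c] coh by auto
  thus ?thesis unfolding C_c_PIO_eq_Inf by (simp add: top_ereal_def)
qed

lemma coherence_ratio_le_qubit:
  assumes "0 \<le> p" "p \<le> 1" "0 \<le> s" and z: "cmod z \<le> s * sqrt (p * (1 - p))"
  shows "coherence_ratio_le s (qubit p z)"
  unfolding coherence_ratio_le_def
proof (intro conjI allI impI)
  fix a show "qubit p z a a = complex_of_real (Re (qubit p z a a))" "0 \<le> Re (qubit p z a a)"
    unfolding qubit_def using assms(1,2) by auto
next
  fix a b :: nat assume "a \<noteq> b"
  thus "cmod (qubit p z a b) \<le> s * sqrt (Re (qubit p z a a) * Re (qubit p z b b))"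
    unfolding qubit_def using z assms(3) by (auto simp: mult.commute)
qed

theorem corollary3:
  fixes p :: real and z :: complex
  assumes "0 \<le> p" and "p \<le> 1"
    and "min p (1 - p) < cmod z" and "cmod z < sqrt (p * (1 - p))"
  shows "C_d_PIO (qubit p z) = 0 \<and> C_c_PIO (qubit p z) = \<infinity>"
proof
  have herm: "\<forall>a b. qubit p z a b = cnj (qubit p z b a)" and tr: "qubit p z 0 0 + qubit p z 1 1 = 1"
    unfolding qubit_def by auto
  define s where "s = cmod z / sqrt (p * (1 - p))"
  have "0 < sqrt (p * (1 - p))" using assms(4) norm_ge_zero[of z] by linarith
  hence "0 \<le> s" "s < 1" "cmod z = s * sqrt (p * (1 - p))" unfolding s_def using assms(4) by auto
  with assms(1,2) have "coherence_ratio_le s (qubit p z)" by (intro coherence_ratio_le_qubit) auto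
  with \<open>0 \<le> s\<close> \<open>s < 1\<close> show "C_d_PIO (qubit p z) = 0" by (intro C_d_PIO_eq_zero herm tr)
  show "C_c_PIO (qubit p z) = \<infinity>"
    using assms(3) by (intro C_c_PIO_eq_infinity herm tr) (simp add: qubit_def)
qed

end
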